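(* Let $n\in\mathbb N$ and let $\mathfrak S$ be as below. Then: (1) $\mathfrak S$ is a $\mathbb C$-algebra with respect to termwise addition and the multiplication given by the Leibniz rule, $\big(\sum_{\underline k}a_{\underline k}\underline\partial^{\underline k}\big)\cdot\big(\sum_{\underline l}b_{\underline l}\underline\partial^{\underline l}\big)=\sum_{\underline k,\underline l}\sum_{\underline 0\le\underline i\le\underline k}\binom{k_1}{i_1}\cdots\binom{k_n}{i_n}a_{\underline k}\frac{\partial^{|\underline i|}b_{\underline l}}{\partial x_1^{i_1}\cdots\partial x_n^{i_n}}\underline\partial^{\underline k+\underline l-\underline i}$ (which is well defined on $\mathfrak S$); in particular $\mathfrak S$ contains $\mathfrak D=\mathbb C[[x_1,\dots,x_n]][\partial_1,\dots,\partial_n]$ as a subalgebra; (2) the map $\sum_{\underline k}a_{\underline k}\underline\partial^{\underline k}\mapsto\sum_{\underline k}a_{\underline k}(0)\underline\partial^{\underline k}$ induces an isomorphism of $\mathbb C$-vector spaces $\mathfrak S/\mathfrak m\mathfrak S\to\mathbb C[\partial_1,\dots,\partial_n]$; (3) there is a natural injective algebra homomorphism $\mathfrak S\to\operatorname{End}^{\mathrm c}_{\mathbb C}(\widehat B)$ into the algebra of $\mathbb C$-linear endomorphisms of $\widehat B$ continuous in the $\mathfrak m$-adic topology; it makes $\widehat B$ a left $\mathfrak S$-module extending the natural left $\mathfrak D$-module structure.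
   Context: $\widehat B=\mathbb C[[x_1,\dots,x_n]]$, $\mathfrak m=(x_1,\dots,x_n)$, $\upsilon$ the $\mathfrak m$-adic valuation on $\widehat B$. Multi-indices $\underline k\in\mathbb N_0^n$, $\underline\partial^{\underline k}=\partial_1^{k_1}\cdots\partial_n^{k_n}$, $|\underline k|=k_1+\dots+k_n$. For a formal sum $P=\sum_{\underline k\ge\underline 0}a_{\underline k}\underline\partial^{\underline k}$ with $a_{\underline k}\in\widehat B$, its order is $o(P)=\sup\{|\underline k|-\upsilon(a_{\underline k})\}\in\mathbb Z\cup\{\infty\}$, and $\mathfrak S=\{P:o(P)<\infty\}$. *)

theory Defs
  imports "HOL-Algebra.Algebra" "HOL-Library.Extended_Real"
begin

text \<open>Multi-indices in N_0^n are functions 'n => nat for a finite index type 'n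
  (so n = CARD('n)).  An element of C[[x_1,...,x_n]] is given by its coefficient
  function; a formal operator sum_k a_k d^k is the function k |-> a_k.\<close>

type_synonym 'n mi = "'n \<Rightarrow> nat"
type_synonym 'n ps = "'n mi \<Rightarrow> complex"
type_synonym 'n dop = "'n mi \<Rightarrow> 'n ps"

definition mi_zero :: "'n mi" where "mi_zero = (\<lambda>_. 0)"

definition ps_zero :: "'n ps" where "ps_zero = (\<lambda>_. 0)"

definition deg :: "('n::finite) mi \<Rightarrow> nat" where
  "deg k = (\<Sum>j\<in>UNIV. k j)"

text \<open>m-adic valuation (infinity for 0)\<close>
definition mval :: "('n::finite) ps \<Rightarrow> enat" where
  "mval a = (INF \<alpha>\<in>{\<alpha>. a \<alpha> \<noteq> 0}. enat (deg \<alpha>))"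

definition op_order :: "('n::finite) dop \<Rightarrow> ereal" where
  "op_order P = (SUP k. ereal (real (deg k)) - ereal_of_enat (mval (P k)))"

definition S_set :: "('n::finite) dop set" where
  "S_set = {P. op_order P < \<infinity>}"

definition D_set :: "('n::finite) dop set" where
  "D_set = {P. finite {k. P k \<noteq> ps_zero}}"

definition ps_mult :: "('n::finite) ps \<Rightarrow> 'n ps \<Rightarrow> 'n ps" where
  "ps_mult a b = (\<lambda>\<alpha>. \<Sum>\<beta>\<in>{\<beta>. \<beta> \<le> \<alpha>}. a \<beta> * b (\<lambda>j. \<alpha> j - \<beta> j))"

definition ps_deriv :: "('n::finite) mi \<Rightarrow> 'n ps \<Rightarrow> 'n ps" where
  "ps_deriv i b = (\<lambda>\<alpha>. (\<Prod>j\<in>UNIV. pochhammer (of_nat (\<alpha> j + 1)) (i j)) * b (\<lambda>j. \<alpha> j + i j))"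

definition mbinom :: "('n::finite) mi \<Rightarrow> 'n mi \<Rightarrow> complex" where
  "mbinom k i = (\<Prod>j\<in>UNIV. of_nat (k j choose i j))"

text \<open>the x^alpha coefficient of the d^m coefficient contributed by the index triple (k,l,i)
  in the Leibniz product formula\<close>
definition leib_term :: "('n::finite) dop \<Rightarrow> 'n dop \<Rightarrow> 'n mi \<Rightarrow> 'n mi \<Rightarrow> 'n mi \<times> 'n mi \<times> 'n mi \<Rightarrow> complex" where
  "leib_term P Q m \<alpha> t = (case t of (k, l, i) \<Rightarrow>
     (if i \<le> k \<and> (\<lambda>j. k j + l j - i j) = m
      then mbinom k i * ps_mult (P k) (ps_deriv i (Q l)) \<alpha> else 0))"

text \<open>Leibniz product: sum of all (finitely many, on S) nonzero contributions\<close>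
definition op_mult :: "('n::finite) dop \<Rightarrow> 'n dop \<Rightarrow> 'n dop" where
  "op_mult P Q = (\<lambda>m \<alpha>. \<Sum>t\<in>{t. leib_term P Q m \<alpha> t \<noteq> 0}. leib_term P Q m \<alpha> t)"

definition op_add :: "('n::finite) dop \<Rightarrow> 'n dop \<Rightarrow> 'n dop" where
  "op_add P Q = (\<lambda>k \<alpha>. P k \<alpha> + Q k \<alpha>)"

definition op_smult :: "complex \<Rightarrow> ('n::finite) dop \<Rightarrow> 'n dop" where
  "op_smult c P = (\<lambda>k \<alpha>. c * P k \<alpha>)"

definition op_zero :: "('n::finite) dop" where
  "op_zero = (\<lambda>k \<alpha>. 0)"

definition coeff_op :: "('n::finite) ps \<Rightarrow> 'n dop" where
  "coeff_op f = (\<lambda>k. if k = mi_zero then f else ps_zero)"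

definition op_one :: "('n::finite) dop" where
  "op_one = coeff_op (\<lambda>\<alpha>. if \<alpha> = mi_zero then 1 else 0)"

definition CC :: "complex ring" where
  "CC = \<lparr>carrier = UNIV, monoid.mult = (*), monoid.one = 1, ring.zero = 0, ring.add = (+)\<rparr>"

definition S_ring :: "(complex, ('n::finite) dop) module" where
  "S_ring = \<lparr>carrier = S_set, monoid.mult = op_mult, monoid.one = op_one, ring.zero = op_zero,
             ring.add = op_add, module.smult = op_smult\<rparr>"

definition max_ideal :: "('n::finite) ps set" where
  "max_ideal = {f. f mi_zero = 0}"

definition mS_set :: "('n::finite) dop set" where
  "mS_set = {Q. \<exists>(N::nat) f P. (\<forall>t<N. f t \<in> max_ideal \<and> P t \<in> S_set) \<and>
               Q = (\<lambda>k \<alpha>. \<Sum>t<N. op_mult (coeff_op (f t)) (P t) k \<alpha>)}"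

definition poly_set :: "(('n::finite) mi \<Rightarrow> complex) set" where
  "poly_set = {c. finite {k. c k \<noteq> 0}}"

definition const_map :: "('n::finite) dop \<Rightarrow> ('n mi \<Rightarrow> complex)" where
  "const_map P = (\<lambda>k. P k mi_zero)"

definition app_term :: "('n::finite) dop \<Rightarrow> 'n ps \<Rightarrow> 'n mi \<Rightarrow> 'n mi \<Rightarrow> complex" where
  "app_term P b \<alpha> k = ps_mult (P k) (ps_deriv k b) \<alpha>"

definition op_apply :: "('n::finite) dop \<Rightarrow> 'n ps \<Rightarrow> 'n ps" where
  "op_apply P b = (\<lambda>\<alpha>. \<Sum>k\<in>{k. app_term P b \<alpha> k \<noteq> 0}. app_term P b \<alpha> k)"

definition D_action :: "('n::finite) dop \<Rightarrow> 'n ps \<Rightarrow> 'n ps" where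
  "D_action P b = (\<lambda>\<alpha>. \<Sum>k\<in>{k. P k \<noteq> ps_zero}. ps_mult (P k) (ps_deriv k b) \<alpha>)"

text \<open>C-linear and continuous for the m-adic topology
  (neighbourhood basis b + m^N = {c. v(c - b) >= N})\<close>
definition linear_endo :: "(('n::finite) ps \<Rightarrow> 'n ps) \<Rightarrow> bool" where
  "linear_endo T \<longleftrightarrow> (\<forall>b c. T (\<lambda>\<alpha>. b \<alpha> + c \<alpha>) = (\<lambda>\<alpha>. T b \<alpha> + T c \<alpha>)) \<and>
                     (\<forall>s b. T (\<lambda>\<alpha>. s * b \<alpha>) = (\<lambda>\<alpha>. s * T b \<alpha>))"

definition madic_continuous :: "(('n::finite) ps \<Rightarrow> 'n ps) \<Rightarrow> bool" where
  "madic_continuous T \<longleftrightarrow> (\<forall>b (N::nat). \<exists>(M::nat). \<forall>c.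
      mval (\<lambda>\<alpha>. c \<alpha> - b \<alpha>) \<ge> enat M \<longrightarrow> mval (\<lambda>\<alpha>. T c \<alpha> - T b \<alpha>) \<ge> enat N)"

end

theory Submission
  imports Defs "HOL-Library.Groups_Big_Fun"
begin

text \<open>An operator \<open>P = \<Sum> a\<^sub>k \<partial>\<^sup>k\<close> lies in \<open>\<SS>\<close> iff for some \<open>C\<close> every monomial
  \<open>x\<^sup>\<beta> \<partial>\<^sup>k\<close> occurring in it satisfies \<open>|k| \<le> |\<beta>| + C\<close>. This bound makes every sum below locally
  finite: a fixed coefficient of \<open>P Q\<close> or of \<open>P b\<close> receives only finitely many contributions.
  So \<open>P\<close> acts on \<open>\<complex>[[x]]\<close> coefficientwise, and the action of the Leibniz product is the
  composition of the actions because, on monomials, this is the Chu-Vandermonde identity for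
  falling factorials. The action is faithful (apply \<open>P\<close> to \<open>x\<^sup>k\<close> for \<open>k\<close> of minimal degree in the
  support of \<open>P\<close>), so the ring axioms are inherited from composition of endomorphisms. For (2),
  an operator with vanishing constant terms is \<open>\<Sum>\<^sub>j x\<^sub>j Q\<^sub>j\<close>: assign each monomial \<open>x\<^sup>\<alpha> \<noteq> 1\<close>
  to one variable dividing it.\<close>

section \<open>Falling factorials\<close>

definition falling :: "nat \<Rightarrow> nat \<Rightarrow> nat" where
  "falling s i = (s choose i) * fact i"

lemma pochhammer_Suc_eq_falling:
  "pochhammer (1 + of_nat e :: 'a::comm_semiring_1) i = of_nat (falling (e + i) i)"
proof (induction i)
  case 0
  then show ?case by (simp add: falling_def)
next
  case (Suc i)
  have "falling (e + Suc i) (Suc i) = (Suc (e + i) choose Suc i) * Suc i * fact i"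
    unfolding falling_def by (simp only: add_Suc_right fact_Suc of_nat_id mult.assoc)
  also have "\<dots> = Suc (e + i) * ((e + i) choose i) * fact i"
    by (metis Suc_times_binomial_eq)
  also have "\<dots> = falling (e + i) i * (e + i + 1)"
    by (simp add: falling_def algebra_simps)
  finally show ?case
    using Suc by (simp add: pochhammer_rec' algebra_simps)
qed

lemma falling_add: "falling t (l + r) = falling t l * falling (t - l) r"
proof (cases "l + r \<le> t")
  case True
  have "(t choose (l + r)) * ((l + r) choose l) = (t choose l) * ((t - l) choose r)"
    using choose_mult[of l "l + r" t] True by simp
  moreover have "((l + r) choose l) * fact l * fact r = fact (l + r)"
    using binomial_fact_lemma[of l "l + r"] by (simp add: algebra_simps)
  ultimately have "(t choose (l + r)) * fact (l + r) = (t choose l) * ((t - l) choose r) * fact l * fact r"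
    by (metis mult.assoc)
  then show ?thesis by (simp add: falling_def algebra_simps)
next
  case False
  then have lhs: "t choose (l + r) = 0" by simp
  have rhs: "(t choose l) * ((t - l) choose r) = 0"
    using False by (cases "l \<le> t") auto
  have "(t choose l) * fact l * ((t - l choose r) * fact r)
      = ((t choose l) * ((t - l) choose r)) * (fact l * fact r)"
    by (simp only: mult_ac)
  then show ?thesis unfolding falling_def lhs rhs by simp
qed

lemma falling_Vandermonde:
  "(\<Sum>i\<le>k. (k choose i) * falling s i * falling g (k - i)) = falling (s + g) k"
proof -
  have summand: "(k choose i) * falling s i * falling g (k - i) = fact k * ((s choose i) * (g choose (k - i)))"
    if "i \<in> {..k}" for i
  proof -
    have "(k choose i) * fact i * fact (k - i) = fact k"
      using binomial_fact_lemma[of i k] that by (simp add: algebra_simps)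
    moreover have "(k choose i) * ((s choose i) * fact i) * ((g choose (k - i)) * fact (k - i))
        = ((k choose i) * fact i * fact (k - i)) * ((s choose i) * (g choose (k - i)))"
      by (simp only: mult_ac)
    ultimately show ?thesis unfolding falling_def by simp
  qed
  have "(\<Sum>i\<le>k. (k choose i) * falling s i * falling g (k - i))
      = (\<Sum>i\<le>k. fact k * ((s choose i) * (g choose (k - i))))"
    by (rule sum.cong) (simp_all only: summand)
  also have "\<dots> = fact k * ((s + g) choose k)"
    by (simp add: sum_distrib_left[symmetric] vandermonde)
  finally show ?thesis by (simp add: falling_def)
qed

lemma falling_Leibniz:
  assumes "l \<le> t"
  shows "(\<Sum>i\<le>k. (k choose i) * falling s i * falling t (k + l - i)) = falling (s + t - l) k * falling t l"
proof -
  have summand: "(k choose i) * falling s i * falling t (k + l - i)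
      = falling t l * ((k choose i) * falling s i * falling (t - l) (k - i))" if "i \<in> {..k}" for i
  proof -
    have "k + l - i = l + (k - i)" using that by auto
    then show ?thesis by (simp add: falling_add)
  qed
  have "(\<Sum>i\<le>k. (k choose i) * falling s i * falling t (k + l - i))
      = falling t l * falling (s + (t - l)) k"
    by (simp only: sum.cong[OF refl summand] sum_distrib_left[symmetric] falling_Vandermonde)
  then show ?thesis using assms by simp
qed

text \<open>\<open>\<partial>\<^sup>i x\<^sup>\<sigma> = mfalling \<sigma> i \<cdot> x\<^sup>\<sigma>\<^sup>-\<^sup>i\<close>\<close>
definition mfalling :: "('n::finite) mi \<Rightarrow> 'n mi \<Rightarrow> complex" where
  "mfalling \<sigma> i = (\<Prod>j\<in>UNIV. of_nat (falling (\<sigma> j) (i j)))"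

lemma ps_deriv_eq_mfalling:
  "ps_deriv i b = (\<lambda>\<alpha>. mfalling (\<lambda>j. \<alpha> j + i j) i * b (\<lambda>j. \<alpha> j + i j))"
  by (simp add: ps_deriv_def mfalling_def pochhammer_Suc_eq_falling)

lemma mfalling_zero [simp]: "mfalling \<sigma> (\<lambda>_. 0) = 1"
  by (simp add: mfalling_def falling_def)

lemma mfalling_self_nonzero: "mfalling k k \<noteq> 0"
  by (simp add: mfalling_def falling_def)

lemma mfalling_eq_0: "\<not> i \<le> \<sigma> \<Longrightarrow> mfalling \<sigma> i = 0"
  by (auto simp: mfalling_def falling_def le_fun_def not_le intro!: prod_zero)

lemma mi_le_eq_PiE: "{i::('n::finite) mi. i \<le> k} = PiE UNIV (\<lambda>j. {..k j})"
  by (auto simp: le_fun_def PiE_def)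

lemma finite_mi_le: "finite {i::('n::finite) mi. i \<le> k}"
  by (simp add: mi_le_eq_PiE finite_PiE)

lemma mfalling_Leibniz:
  fixes k l s t :: "('n::finite) mi"
  assumes "l \<le> t"
  shows "(\<Sum>i\<in>{i. i \<le> k}. mbinom k i * mfalling s i * mfalling t (\<lambda>j. k j + l j - i j))
        = mfalling (\<lambda>j. s j + t j - l j) k * mfalling t l"
proof -
  have "(\<Sum>i\<in>{i. i \<le> k}. mbinom k i * mfalling s i * mfalling t (\<lambda>j. k j + l j - i j))
     = (\<Sum>i\<in>PiE UNIV (\<lambda>j. {..k j}). \<Prod>j\<in>UNIV.
          of_nat ((k j choose i j) * falling (s j) (i j) * falling (t j) (k j + l j - i j)))"
    unfolding mi_le_eq_PiE mbinom_def mfalling_def by (simp add: prod.distrib)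
  also have "\<dots> = (\<Prod>j\<in>UNIV. \<Sum>i\<le>k j.
          of_nat ((k j choose i) * falling (s j) i * falling (t j) (k j + l j - i)))"
    by (rule prod_sum_PiE[symmetric]) auto
  also have "\<dots> = (\<Prod>j\<in>UNIV. of_nat (falling (s j + t j - l j) (k j) * falling (t j) (l j)))"
    using assms by (simp only: of_nat_sum[symmetric] falling_Leibniz le_fun_def)
  finally show ?thesis by (simp add: mfalling_def prod.distrib)
qed

section \<open>Multi-indices and the order bound\<close>

abbreviation mi_add :: "('n::finite) mi \<Rightarrow> 'n mi \<Rightarrow> 'n mi" where
  "mi_add a b \<equiv> (\<lambda>j. a j + b j)"

abbreviation mi_diff :: "('n::finite) mi \<Rightarrow> 'n mi \<Rightarrow> 'n mi" where
  "mi_diff a b \<equiv> (\<lambda>j. a j - b j)"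

abbreviation deg_atMost :: "nat \<Rightarrow> ('n::finite) mi set" where
  "deg_atMost N \<equiv> {k. deg k \<le> N}"

lemma deg_mi_add: "deg (mi_add a b) = deg a + deg b"
  by (simp add: deg_def sum.distrib)

lemma deg_mono: "a \<le> b \<Longrightarrow> deg a \<le> deg b"
  unfolding deg_def le_fun_def by (simp add: sum_mono)

lemma deg_zero [simp]: "deg (mi_zero :: ('n::finite) mi) = 0"
  by (simp add: deg_def mi_zero_def)

lemma deg_eq_0_iff: "deg (a::('n::finite) mi) = 0 \<longleftrightarrow> a = mi_zero"
  by (simp add: deg_def mi_zero_def fun_eq_iff)

lemma finite_deg_atMost: "finite (deg_atMost N :: ('n::finite) mi set)"
proof -
  have "a j \<le> deg a" for a :: "'n mi" and j
    unfolding deg_def by (rule member_le_sum) auto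
  then have "deg_atMost N \<subseteq> PiE (UNIV :: 'n set) (\<lambda>_. {..N})"
    by (auto simp: PiE_def intro: le_trans)
  then show ?thesis by (rule finite_subset) (simp add: finite_PiE)
qed

lemma finite_deg_bounded: "finite (F :: ('n::finite) mi set) \<Longrightarrow> \<exists>C. \<forall>k\<in>F. deg k \<le> C"
  using finite_nat_set_iff_bounded_le[of "deg ` F"] by auto

lemma mi_add_eq_iff: "mi_add b e = (a::('n::finite) mi) \<longleftrightarrow> e = mi_diff a b \<and> b \<le> a"
proof
  assume "mi_add b e = a"
  then have "b x + e x = a x" for x by metis
  then show "e = mi_diff a b \<and> b \<le> a"
    unfolding fun_eq_iff le_fun_def by (metis add_diff_cancel_left' le_add1)
qed (auto simp: fun_eq_iff le_fun_def)

lemma mi_diff_eq_if_add_eq: "mi_add a b = (c::('n::finite) mi) \<Longrightarrow> a = mi_diff c b"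
  by (drule sym) simp

lemma mi_diff_add_cancel_iff: "mi_add (mi_diff a b) b = (a::('n::finite) mi) \<longleftrightarrow> b \<le> a"
  by (auto simp: fun_eq_iff le_fun_def) (metis le_add2)

lemma mi_add_diff_cancel_iff: "mi_add b (mi_diff a b) = (a::('n::finite) mi) \<longleftrightarrow> b \<le> a"
  by (auto simp: fun_eq_iff le_fun_def) (metis le_add1)

text \<open>\<open>order_le C P\<close> is \<open>o(P) \<le> C\<close>.\<close>
definition order_le :: "nat \<Rightarrow> ('n::finite) dop \<Rightarrow> bool" where
  "order_le C P \<longleftrightarrow> (\<forall>k \<beta>. P k \<beta> \<noteq> 0 \<longrightarrow> deg k \<le> deg \<beta> + C)"

lemma mval_le_deg: "a \<alpha> \<noteq> 0 \<Longrightarrow> mval a \<le> enat (deg \<alpha>)"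
  unfolding mval_def by (rule INF_lower2[of \<alpha>]) auto

lemma enat_le_mval_iff: "enat N \<le> mval a \<longleftrightarrow> (\<forall>\<alpha>. a \<alpha> \<noteq> 0 \<longrightarrow> N \<le> deg \<alpha>)"
  unfolding mval_def by (auto simp: le_INF_iff)

lemma mval_attained:
  assumes "a \<alpha> \<noteq> 0"
  obtains \<beta> where "a \<beta> \<noteq> 0" "mval a = enat (deg \<beta>)"
proof -
  let ?A = "(\<lambda>\<alpha>. enat (deg \<alpha>)) ` {\<alpha>. a \<alpha> \<noteq> 0}"
  have "?A \<noteq> {}" using assms by auto
  then have "Inf ?A \<in> ?A"
    unfolding Inf_enat_def by (simp only: if_False) (rule LeastI_ex, blast)
  then show ?thesis using that unfolding mval_def by auto
qed

lemma order_le_if_S_set: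
  assumes "P \<in> S_set"
  obtains C where "order_le C P"
proof -
  have "op_order P < \<infinity>" using assms by (simp add: S_set_def)
  then obtain r where r: "max (op_order P) 0 = ereal r"
    by (cases "max (op_order P) 0") (auto simp: max_def split: if_splits)
  define C where "C = nat \<lceil>r\<rceil>"
  have "op_order P \<le> ereal (real C)"
    using r max.cobounded1[of "op_order P" 0] unfolding C_def
    by (metis ereal_less_eq(3) of_nat_nat order.trans real_nat_ceiling_ge
        ereal_max_0 max.bounded_iff zero_ereal_def)
  have "order_le C P"
    unfolding order_le_def
  proof (intro allI impI)
    fix k \<beta> assume "P k \<beta> \<noteq> 0"
    then obtain n where n: "mval (P k) = enat n" "n \<le> deg \<beta>"
      using mval_le_deg[of "P k" \<beta>] by (cases "mval (P k)") auto
    have "ereal (real (deg k)) - ereal_of_enat (mval (P k)) \<le> op_order P"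
      unfolding op_order_def by (rule SUP_upper) simp
    then have "ereal (real (deg k)) - ereal (real n) \<le> ereal (real C)"
      using n \<open>op_order P \<le> ereal (real C)\<close> by (metis ereal_of_enat_simps(1) order.trans)
    then show "deg k \<le> deg \<beta> + C" using n by simp
  qed
  then show ?thesis by (rule that)
qed

lemma S_set_if_order_le:
  assumes "order_le C P"
  shows "P \<in> S_set"
proof -
  have "ereal (real (deg k)) - ereal_of_enat (mval (P k)) \<le> ereal (real C)" for k
  proof (cases "\<exists>\<alpha>. P k \<alpha> \<noteq> 0")
    case True
    then obtain \<beta> where "P k \<beta> \<noteq> 0" "mval (P k) = enat (deg \<beta>)"
      using mval_attained by metis
    moreover have "deg k \<le> deg \<beta> + C"
      using assms \<open>P k \<beta> \<noteq> 0\<close> by (auto simp: order_le_def)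
    ultimately show ?thesis by simp
  next
    case False
    then have "mval (P k) = \<infinity>" by (simp add: mval_def top_enat_def)
    then show ?thesis by simp
  qed
  then have "op_order P \<le> ereal (real C)"
    unfolding op_order_def by (rule SUP_least)
  then show ?thesis by (auto simp: S_set_def)
qed

lemma order_le_op_add: "order_le C1 P \<Longrightarrow> order_le C2 Q \<Longrightarrow> order_le (C1 + C2) (op_add P Q)"
  unfolding order_le_def op_add_def by (metis add.left_neutral add_le_mono le_add1 le_add2 order.trans)

lemma order_le_op_smult: "order_le C P \<Longrightarrow> order_le C (op_smult c P)"
  unfolding order_le_def op_smult_def by auto

lemma order_le_op_one: "order_le 0 op_one"
  unfolding order_le_def op_one_def coeff_op_def ps_zero_def by (auto simp: mi_zero_def deg_def)

section \<open>Locally finite sums\<close>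

lemma Sum_any_nested:
  fixes g :: "'a \<Rightarrow> 'b \<Rightarrow> 'c::comm_monoid_add"
  assumes "finite {(a, b). g a b \<noteq> 0}"
  shows "Sum_any (\<lambda>a. Sum_any (g a)) = Sum_any (\<lambda>(a, b). g a b)"
proof (rule Sum_any.cartesian_product)
  let ?S = "{(a, b). g a b \<noteq> 0}"
  show "finite (fst ` ?S \<times> snd ` ?S)" using assms by simp
  show "{a. \<exists>b. g a b \<noteq> 0} \<times> {b. \<exists>a. g a b \<noteq> 0} \<subseteq> fst ` ?S \<times> snd ` ?S"
    by (force simp: image_iff)
qed

lemma Sum_any_fibres:
  fixes g :: "'a \<Rightarrow> 'c::comm_monoid_add"
  assumes fin: "finite {x. g x \<noteq> 0}"
  shows "Sum_any g = Sum_any (\<lambda>y. Sum_any (\<lambda>x. if p x = y then g x else 0))"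
proof -
  let ?S = "{x. g x \<noteq> 0}"
  have fibre: "Sum_any (\<lambda>x. if p x = y then g x else 0) = sum g {x\<in>?S. p x = y}" for y
  proof -
    have "Sum_any (\<lambda>x. if p x = y then g x else 0) = sum (\<lambda>x. if p x = y then g x else 0) ?S"
      by (rule Sum_any.expand_superset) (use fin in auto)
    also have "\<dots> = sum g {x\<in>?S. p x = y}" using fin by (simp only: sum.inter_filter)
    finally show ?thesis .
  qed
  have "Sum_any (\<lambda>y. Sum_any (\<lambda>x. if p x = y then g x else 0))
      = sum (\<lambda>y. sum g {x\<in>?S. p x = y}) (p ` ?S)"
    unfolding fibre
    by (rule Sum_any.expand_superset) (use fin in \<open>auto elim: sum.not_neutral_contains_not_neutral\<close>)
  also have "\<dots> = sum g ?S"
    by (rule sum.group) (use fin in auto)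
  finally show ?thesis by (simp add: Sum_any.expand_set)
qed

lemma Sum_any_reindex:
  fixes g :: "'a \<Rightarrow> 'c::comm_monoid_add"
  assumes "inj f" and "{x. g x \<noteq> 0} \<subseteq> range f"
  shows "Sum_any g = Sum_any (g \<circ> f)"
proof -
  have "f ` {y. g (f y) \<noteq> 0} = {x. g x \<noteq> 0}" using assms(2) by auto
  then have "sum g {x. g x \<noteq> 0} = sum g (f ` {y. g (f y) \<noteq> 0})" by simp
  also have "\<dots> = sum (g \<circ> f) {y. g (f y) \<noteq> 0}"
    by (rule sum.reindex) (use assms(1) in \<open>auto intro: inj_on_subset\<close>)
  finally show ?thesis by (simp add: Sum_any.expand_set)
qed

lemma finite_nonzero_uncurried: "finite {x. g x \<noteq> 0} \<Longrightarrow> finite {(a, b). g (a, b) \<noteq> 0}"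
  by (simp add: case_prod_unfold)

section \<open>Expansion of the action and of the Leibniz product\<close>

lemma ps_mult_eq_Sum_any:
  "ps_mult a c \<alpha> = Sum_any (\<lambda>(\<beta>, \<epsilon>). if mi_add \<beta> \<epsilon> = \<alpha> then a \<beta> * c \<epsilon> else 0)"
proof -
  have fin: "finite {(\<beta>, \<epsilon>). (if mi_add \<beta> \<epsilon> = \<alpha> then a \<beta> * c \<epsilon> else 0) \<noteq> 0}"
    by (rule finite_subset[OF _ finite_cartesian_product[OF finite_mi_le[of \<alpha>] finite_mi_le[of \<alpha>]]])
       (auto simp: le_fun_def split: if_splits)
  have inner: "Sum_any (\<lambda>\<epsilon>. if mi_add \<beta> \<epsilon> = \<alpha> then a \<beta> * c \<epsilon> else 0)
      = (if \<beta> \<in> {\<beta>. \<beta> \<le> \<alpha>} then a \<beta> * c (mi_diff \<alpha> \<beta>) else 0)" for \<beta>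
  proof -
    have delta: "(\<lambda>\<epsilon>. if mi_add \<beta> \<epsilon> = \<alpha> then a \<beta> * c \<epsilon> else 0)
        = (\<lambda>\<epsilon>. if \<epsilon> = mi_diff \<alpha> \<beta> then (if \<beta> \<le> \<alpha> then a \<beta> * c \<epsilon> else 0) else 0)"
      by (rule ext) (auto simp: mi_add_eq_iff)
    show ?thesis unfolding delta by simp
  qed
  have "Sum_any (\<lambda>(\<beta>, \<epsilon>). if mi_add \<beta> \<epsilon> = \<alpha> then a \<beta> * c \<epsilon> else 0)
      = Sum_any (\<lambda>\<beta>. if \<beta> \<in> {\<beta>. \<beta> \<le> \<alpha>} then a \<beta> * c (mi_diff \<alpha> \<beta>) else 0)"
    using Sum_any_nested[OF fin] by (simp only: inner)
  also have "\<dots> = sum (\<lambda>\<beta>. a \<beta> * c (mi_diff \<alpha> \<beta>)) {\<beta>. \<beta> \<le> \<alpha>}"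
    by (rule Sum_any.conditionalize[symmetric]) (simp add: finite_mi_le)
  finally show ?thesis by (simp add: ps_mult_def)
qed

lemma ps_mult_nonzeroD:
  assumes "ps_mult a c \<alpha> \<noteq> 0"
  obtains \<beta> where "\<beta> \<le> \<alpha>" "a \<beta> \<noteq> 0" "c (mi_diff \<alpha> \<beta>) \<noteq> 0"
proof -
  from assms obtain \<beta> where "\<beta> \<in> {\<beta>. \<beta> \<le> \<alpha>}" "a \<beta> * c (mi_diff \<alpha> \<beta>) \<noteq> 0"
    unfolding ps_mult_def by (rule sum.not_neutral_contains_not_neutral)
  then show ?thesis using that by auto
qed

type_synonym 'n apply_index = "'n mi \<times> 'n mi \<times> 'n mi"
type_synonym 'n mult_index = "('n mi \<times> 'n mi \<times> 'n mi) \<times> ('n mi \<times> 'n mi)"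

text \<open>The contribution of the monomial \<open>x\<^sup>\<beta> \<partial>\<^sup>k\<close> of \<open>P\<close> and of the coefficient of \<open>x\<^sup>\<epsilon>\<^sup>+\<^sup>k\<close> in \<open>b\<close>
  to the coefficient of \<open>x\<^sup>\<alpha>\<close> in \<open>P b\<close>.\<close>
definition apply_summand :: "('n::finite) dop \<Rightarrow> 'n ps \<Rightarrow> 'n mi \<Rightarrow> 'n apply_index \<Rightarrow> complex" where
  "apply_summand P b \<alpha> t = (case t of (k, \<beta>, \<epsilon>) \<Rightarrow>
     if mi_add \<beta> \<epsilon> = \<alpha> then P k \<beta> * (mfalling (mi_add \<epsilon> k) k * b (mi_add \<epsilon> k)) else 0)"

lemma apply_summand_nonzeroD:
  "apply_summand P b \<alpha> (k, \<beta>, \<epsilon>) \<noteq> 0 \<Longrightarrow> mi_add \<beta> \<epsilon> = \<alpha> \<and> P k \<beta> \<noteq> 0"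
  by (auto simp: apply_summand_def split: if_splits)

lemma finite_apply_summand:
  assumes "order_le C P"
  shows "finite {t. apply_summand P b \<alpha> t \<noteq> 0}"
proof (rule finite_subset)
  let ?B = "deg_atMost (deg \<alpha> + C)"
  show "{t. apply_summand P b \<alpha> t \<noteq> 0} \<subseteq> ?B \<times> ?B \<times> ?B"
  proof
    fix t assume "t \<in> {t. apply_summand P b \<alpha> t \<noteq> 0}"
    moreover obtain k \<beta> \<epsilon> where t: "t = (k, \<beta>, \<epsilon>)" by (cases t)
    ultimately have h: "mi_add \<beta> \<epsilon> = \<alpha>" "P k \<beta> \<noteq> 0" using apply_summand_nonzeroD by blast+
    then have "deg \<alpha> = deg \<beta> + deg \<epsilon>" using deg_mi_add by metis
    moreover have "deg k \<le> deg \<beta> + C" using assms h unfolding order_le_def by blast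
    ultimately show "t \<in> ?B \<times> ?B \<times> ?B" by (simp add: t)
  qed
  show "finite (?B \<times> ?B \<times> ?B)" by (simp add: finite_deg_atMost)
qed

lemma op_apply_eq_Sum_any:
  assumes "order_le C P"
  shows "op_apply P b \<alpha> = Sum_any (apply_summand P b \<alpha>)"
proof -
  have "app_term P b \<alpha> k = Sum_any (\<lambda>p. apply_summand P b \<alpha> (k, p))" for k
    unfolding app_term_def ps_mult_eq_Sum_any ps_deriv_eq_mfalling
    by (rule Sum_any.cong) (simp add: apply_summand_def split: prod.split)
  then have "op_apply P b \<alpha> = Sum_any (\<lambda>k. Sum_any (\<lambda>p. apply_summand P b \<alpha> (k, p)))"
    by (simp add: op_apply_def Sum_any.expand_set)
  also have "\<dots> = Sum_any (\<lambda>(k, p). apply_summand P b \<alpha> (k, p))"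
    by (rule Sum_any_nested, rule finite_nonzero_uncurried[OF finite_apply_summand[OF assms]])
  finally show ?thesis by simp
qed

lemma finite_app_term:
  assumes "P \<in> S_set"
  shows "finite {k. app_term P b \<alpha> k \<noteq> 0}"
proof -
  obtain C where C: "order_le C P" using order_le_if_S_set[OF assms] .
  have "{k. app_term P b \<alpha> k \<noteq> 0} \<subseteq> deg_atMost (deg \<alpha> + C)"
  proof
    fix k assume "k \<in> {k. app_term P b \<alpha> k \<noteq> 0}"
    then have "ps_mult (P k) (ps_deriv k b) \<alpha> \<noteq> 0" by (simp add: app_term_def)
    then obtain \<beta> where "\<beta> \<le> \<alpha>" "P k \<beta> \<noteq> 0" by (rule ps_mult_nonzeroD)
    then show "k \<in> deg_atMost (deg \<alpha> + C)" using C deg_mono unfolding order_le_def by fastforce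
  qed
  then show ?thesis using finite_deg_atMost finite_subset by blast
qed

text \<open>The contribution of the monomials \<open>x\<^sup>\<beta> \<partial>\<^sup>k\<close> of \<open>P\<close> and \<open>x\<^sup>\<rho>\<^sup>+\<^sup>i \<partial>\<^sup>l\<close> of \<open>Q\<close> to the monomial
  \<open>x\<^sup>\<alpha> \<partial>\<^sup>m\<close> of \<open>P Q\<close>, via the summand \<open>i\<close> of the Leibniz rule.\<close>
definition mult_summand :: "('n::finite) dop \<Rightarrow> 'n dop \<Rightarrow> 'n mi \<Rightarrow> 'n mi \<Rightarrow> 'n mult_index \<Rightarrow> complex" where
  "mult_summand P Q m \<alpha> t = (case t of ((k, l, i), (\<beta>, \<rho>)) \<Rightarrow>
     if i \<le> k \<and> (\<lambda>j. k j + l j - i j) = m \<and> mi_add \<beta> \<rho> = \<alpha>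
     then mbinom k i * (P k \<beta> * (mfalling (mi_add \<rho> i) i * Q l (mi_add \<rho> i))) else 0)"

lemma mult_summand_nonzeroD:
  "mult_summand P Q m \<alpha> ((k, l, i), (\<beta>, \<rho>)) \<noteq> 0 \<Longrightarrow>
   i \<le> k \<and> (\<lambda>j. k j + l j - i j) = m \<and> mi_add \<beta> \<rho> = \<alpha> \<and> P k \<beta> \<noteq> 0 \<and> Q l (mi_add \<rho> i) \<noteq> 0"
  by (auto simp: mult_summand_def split: if_splits)

lemma leib_term_eq_Sum_any: "leib_term P Q m \<alpha> t = Sum_any (\<lambda>p. mult_summand P Q m \<alpha> (t, p))"
proof -
  obtain k l i where t: "t = (k, l, i)" by (cases t) auto
  show ?thesis
  proof (cases "i \<le> k \<and> (\<lambda>j. k j + l j - i j) = m")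
    case True
    have fin: "finite {p. (case p of (\<beta>, \<rho>) \<Rightarrow>
        if mi_add \<beta> \<rho> = \<alpha> then P k \<beta> * ps_deriv i (Q l) \<rho> else 0) \<noteq> 0}"
      by (rule finite_subset[OF _ finite_cartesian_product[OF finite_mi_le[of \<alpha>] finite_mi_le[of \<alpha>]]])
         (auto simp: le_fun_def split: if_splits)
    have "leib_term P Q m \<alpha> t = mbinom k i * ps_mult (P k) (ps_deriv i (Q l)) \<alpha>"
      using True by (simp add: t leib_term_def)
    also have "\<dots> = Sum_any (\<lambda>p. mbinom k i * (case p of (\<beta>, \<rho>) \<Rightarrow>
        if mi_add \<beta> \<rho> = \<alpha> then P k \<beta> * ps_deriv i (Q l) \<rho> else 0))"
      unfolding ps_mult_eq_Sum_any by (rule Sum_any_right_distrib[OF fin])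
    also have "\<dots> = Sum_any (\<lambda>p. mult_summand P Q m \<alpha> (t, p))"
      by (rule Sum_any.cong)
         (use True in \<open>simp add: t mult_summand_def ps_deriv_eq_mfalling split: prod.split\<close>)
    finally show ?thesis .
  next
    case False
    then show ?thesis by (auto simp: t leib_term_def mult_summand_def split: prod.split)
  qed
qed

lemma mult_summand_deg_bounds:
  assumes "mult_summand P Q m \<alpha> ((k, l, i), (\<beta>, \<rho>)) \<noteq> 0" "order_le C1 P" "order_le C2 Q"
  shows "deg \<beta> + deg \<rho> = deg \<alpha> \<and> deg k \<le> deg \<alpha> + C1 \<and> deg i \<le> deg \<alpha> + C1 \<and>
         deg l \<le> 2 * deg \<alpha> + C1 + C2 \<and> deg m \<le> deg \<alpha> + C1 + C2"
proof -
  have h: "i \<le> k" "(\<lambda>j. k j + l j - i j) = m" "mi_add \<beta> \<rho> = \<alpha>" "P k \<beta> \<noteq> 0" "Q l (mi_add \<rho> i) \<noteq> 0"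
    using mult_summand_nonzeroD[OF assms(1)] by blast+
  have "deg \<alpha> = deg \<beta> + deg \<rho>" using h deg_mi_add by metis
  moreover have "deg k \<le> deg \<beta> + C1" using assms h unfolding order_le_def by blast
  moreover have "deg l \<le> deg \<rho> + deg i + C2" using assms h unfolding order_le_def by (metis deg_mi_add)
  moreover have "deg i \<le> deg k" using h deg_mono by blast
  moreover have "mi_add m i = mi_add k l"
  proof (rule ext)
    fix x
    have "i x \<le> k x" using h(1) by (simp add: le_fun_def)
    moreover have "k x + l x - i x = m x" using h(2) by (metis (no_types))
    ultimately show "m x + i x = k x + l x" by linarith
  qed
  then have "deg m + deg i = deg k + deg l" by (metis deg_mi_add)
  ultimately show ?thesis by linarith
qed

lemma finite_mult_summand:
  assumes "order_le C1 P" "order_le C2 Q"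
  shows "finite {t. mult_summand P Q m \<alpha> t \<noteq> 0}"
proof (rule finite_subset)
  let ?B = "deg_atMost (2 * deg \<alpha> + C1 + C2)"
  show "{t. mult_summand P Q m \<alpha> t \<noteq> 0} \<subseteq> (?B \<times> ?B \<times> ?B) \<times> (?B \<times> ?B)"
    using mult_summand_deg_bounds[OF _ assms] by fastforce
  show "finite ((?B \<times> ?B \<times> ?B) \<times> (?B \<times> ?B))" by (simp add: finite_deg_atMost)
qed

lemma op_mult_eq_Sum_any:
  assumes "order_le C1 P" "order_le C2 Q"
  shows "op_mult P Q m \<alpha> = Sum_any (mult_summand P Q m \<alpha>)"
proof -
  have "op_mult P Q m \<alpha> = Sum_any (\<lambda>t. Sum_any (\<lambda>p. mult_summand P Q m \<alpha> (t, p)))"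
    by (simp add: op_mult_def Sum_any.expand_set[symmetric] leib_term_eq_Sum_any)
  also have "\<dots> = Sum_any (\<lambda>(t, p). mult_summand P Q m \<alpha> (t, p))"
    by (rule Sum_any_nested, rule finite_nonzero_uncurried[OF finite_mult_summand[OF assms]])
  finally show ?thesis by simp
qed

lemma finite_leib_term:
  assumes "P \<in> S_set" "Q \<in> S_set"
  shows "finite {t. leib_term P Q m \<alpha> t \<noteq> 0}"
proof -
  obtain C1 C2 where C: "order_le C1 P" "order_le C2 Q"
    using assms order_le_if_S_set by metis
  have "{t. leib_term P Q m \<alpha> t \<noteq> 0} \<subseteq> fst ` {t. mult_summand P Q m \<alpha> t \<noteq> 0}"
  proof
    fix t assume "t \<in> {t. leib_term P Q m \<alpha> t \<noteq> 0}"
    then obtain p where "mult_summand P Q m \<alpha> (t, p) \<noteq> 0"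
      by (auto simp: leib_term_eq_Sum_any elim: Sum_any.not_neutral_obtains_not_neutral)
    then show "t \<in> fst ` {t. mult_summand P Q m \<alpha> t \<noteq> 0}" by force
  qed
  then show ?thesis using finite_mult_summand[OF C] finite_subset by blast
qed

lemma order_le_op_mult:
  assumes "order_le C1 P" "order_le C2 Q"
  shows "order_le (C1 + C2) (op_mult P Q)"
  unfolding order_le_def
proof (intro allI impI)
  fix m \<alpha> assume "op_mult P Q m \<alpha> \<noteq> 0"
  then obtain t where "mult_summand P Q m \<alpha> t \<noteq> 0"
    by (auto simp: op_mult_eq_Sum_any[OF assms] elim: Sum_any.not_neutral_obtains_not_neutral)
  then show "deg m \<le> deg \<alpha> + (C1 + C2)"
    using mult_summand_deg_bounds[OF _ assms] by (cases t) fastforce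
qed

section \<open>The action of a product is the composition of the actions\<close>

text \<open>Both \<open>(P Q) b\<close> and \<open>P (Q b)\<close> are expanded as locally finite sums and regrouped by the key
  \<open>(k, \<beta>, l, \<sigma>, \<tau>)\<close>: a monomial \<open>x\<^sup>\<beta> \<partial>\<^sup>k\<close> of \<open>P\<close>, a monomial \<open>x\<^sup>\<sigma> \<partial>\<^sup>l\<close> of \<open>Q\<close> and a coefficient
  \<open>b\<^sub>\<tau>\<close>. On the left each group is a sum over the Leibniz index \<open>i\<close>, on the right it has a single
  term, and the two agree by \<open>mfalling_Leibniz\<close>.\<close>

type_synonym 'n key = "'n mi \<times> 'n mi \<times> 'n mi \<times> 'n mi \<times> 'n mi"

definition mult_apply_summand :: "('n::finite) dop \<Rightarrow> 'n dop \<Rightarrow> 'n ps \<Rightarrow> 'n mi \<Rightarrow>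
    'n apply_index \<times> 'n mult_index \<Rightarrow> complex" where
  "mult_apply_summand P Q b \<alpha> x = (case x of ((m, \<beta>0, \<epsilon>0), u) \<Rightarrow>
     if mi_add \<beta>0 \<epsilon>0 = \<alpha>
     then mult_summand P Q m \<beta>0 u * (mfalling (mi_add \<epsilon>0 m) m * b (mi_add \<epsilon>0 m)) else 0)"

definition mult_apply_key :: "('n::finite) apply_index \<times> 'n mult_index \<Rightarrow> 'n key" where
  "mult_apply_key x = (case x of ((m, \<beta>0, \<epsilon>0), ((k, l, i), (\<beta>, \<rho>))) \<Rightarrow>
     (k, \<beta>, l, mi_add \<rho> i, mi_add \<epsilon>0 m))"

definition mult_apply_fibre :: "('n::finite) key \<Rightarrow> 'n mi \<Rightarrow> 'n apply_index \<times> 'n mult_index" where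
  "mult_apply_fibre y i = (case y of (k, \<beta>, l, \<sigma>, \<tau>) \<Rightarrow>
     ((mi_diff (mi_add k l) i, mi_add \<beta> (mi_diff \<sigma> i), mi_diff \<tau> (mi_diff (mi_add k l) i)),
      ((k, l, i), (\<beta>, mi_diff \<sigma> i))))"

definition mult_apply_coeff :: "('n::finite) dop \<Rightarrow> 'n dop \<Rightarrow> 'n ps \<Rightarrow> 'n mi \<Rightarrow> 'n key \<Rightarrow> complex" where
  "mult_apply_coeff P Q b \<alpha> y = (case y of (k, \<beta>, l, \<sigma>, \<tau>) \<Rightarrow>
     \<Sum>i\<in>{i. i \<le> k}.
       if mi_add \<beta> (mi_add \<sigma> \<tau>) = mi_add \<alpha> (mi_add k l) \<and> i \<le> \<sigma> \<and> mi_diff (mi_add k l) i \<le> \<tau>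
       then mbinom k i * (P k \<beta> * (mfalling \<sigma> i * Q l \<sigma>)) * (mfalling \<tau> (mi_diff (mi_add k l) i) * b \<tau>)
       else 0)"

lemma finite_mult_apply_summand:
  assumes "order_le C1 P" "order_le C2 Q"
  shows "finite {x. mult_apply_summand P Q b \<alpha> x \<noteq> 0}"
proof (rule finite_subset)
  let ?B = "deg_atMost (2 * deg \<alpha> + C1 + C2)"
  show "{x. mult_apply_summand P Q b \<alpha> x \<noteq> 0} \<subseteq> (?B \<times> ?B \<times> ?B) \<times> ((?B \<times> ?B \<times> ?B) \<times> (?B \<times> ?B))"
  proof
    fix x assume "x \<in> {x. mult_apply_summand P Q b \<alpha> x \<noteq> 0}"
    moreover obtain m \<beta>0 \<epsilon>0 u where x: "x = ((m, \<beta>0, \<epsilon>0), u)" by (metis prod.collapse)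
    ultimately have "mi_add \<beta>0 \<epsilon>0 = \<alpha>" and u: "mult_summand P Q m \<beta>0 u \<noteq> 0"
      by (auto simp: mult_apply_summand_def split: if_splits)
    then have "deg \<beta>0 + deg \<epsilon>0 = deg \<alpha>" by (metis deg_mi_add)
    then show "x \<in> (?B \<times> ?B \<times> ?B) \<times> ((?B \<times> ?B \<times> ?B) \<times> (?B \<times> ?B))"
      using mult_summand_deg_bounds[OF _ assms, of m \<beta>0] u by (cases u) (fastforce simp: x)
  qed
  show "finite ((?B \<times> ?B \<times> ?B) \<times> ((?B \<times> ?B \<times> ?B) \<times> (?B \<times> ?B)))"
    by (simp add: finite_deg_atMost)
qed

lemma mult_apply_index_eq_iff:
  fixes i \<sigma> m \<tau> k l \<beta> \<alpha> :: "('n::finite) mi"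
  assumes "i \<le> \<sigma>" "m \<le> \<tau>" "mi_add m i = mi_add k l"
  shows "mi_add (mi_add \<beta> (mi_diff \<sigma> i)) (mi_diff \<tau> m) = \<alpha>
     \<longleftrightarrow> mi_add \<beta> (mi_add \<sigma> \<tau>) = mi_add \<alpha> (mi_add k l)"
proof -
  have h: "i x \<le> \<sigma> x" "m x \<le> \<tau> x" "m x + i x = k x + l x" for x
    using assms by (auto simp: le_fun_def dest: fun_cong[where x=x])
  have "(\<beta> x + (\<sigma> x - i x) + (\<tau> x - m x) = \<alpha> x) \<longleftrightarrow> (\<beta> x + (\<sigma> x + \<tau> x) = \<alpha> x + (k x + l x))" for x
    using h[of x] by linarith
  then show ?thesis by (simp add: fun_eq_iff)
qed

lemma mult_apply_fibre_covers:
  "{x. (if mult_apply_key x = y then mult_apply_summand P Q b \<alpha> x else 0) \<noteq> 0}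
     \<subseteq> range (mult_apply_fibre y)"
proof
  obtain k \<beta> l \<sigma> \<tau> where y: "y = (k, \<beta>, l, \<sigma>, \<tau>)" by (metis prod.collapse)
  fix x assume "x \<in> {x. (if mult_apply_key x = y then mult_apply_summand P Q b \<alpha> x else 0) \<noteq> 0}"
  moreover obtain m \<beta>0 \<epsilon>0 k' l' i \<beta>' \<rho> where x: "x = ((m, \<beta>0, \<epsilon>0), ((k', l', i), (\<beta>', \<rho>)))"
    by (metis prod.collapse)
  ultimately have key: "k' = k" "\<beta>' = \<beta>" "l' = l" "mi_add \<rho> i = \<sigma>" "mi_add \<epsilon>0 m = \<tau>"
    and nz: "mult_summand P Q m \<beta>0 ((k', l', i), (\<beta>', \<rho>)) \<noteq> 0"
    by (auto simp: y mult_apply_key_def mult_apply_summand_def split: if_splits)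
  from mult_summand_nonzeroD[OF nz] have "m = mi_diff (mi_add k l) i" "\<beta>0 = mi_add \<beta> \<rho>"
    using key by auto
  moreover have "\<rho> = mi_diff \<sigma> i" "\<epsilon>0 = mi_diff \<tau> m"
    using key(4,5) by (auto intro: mi_diff_eq_if_add_eq)
  ultimately have "x = mult_apply_fibre y i"
    by (simp add: x y key(1-3) mult_apply_fibre_def)
  then show "x \<in> range (mult_apply_fibre y)" by simp
qed

lemma mult_apply_summand_fibre:
  fixes i k \<beta> l \<sigma> \<tau> :: "('n::finite) mi"
  assumes "i \<le> k"
  defines "y \<equiv> (k, \<beta>, l, \<sigma>, \<tau>)"
  shows "(if mult_apply_key (mult_apply_fibre y i) = y
          then mult_apply_summand P Q b \<alpha> (mult_apply_fibre y i) else 0)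
       = (if mi_add \<beta> (mi_add \<sigma> \<tau>) = mi_add \<alpha> (mi_add k l) \<and> i \<le> \<sigma> \<and> mi_diff (mi_add k l) i \<le> \<tau>
          then mbinom k i * (P k \<beta> * (mfalling \<sigma> i * Q l \<sigma>)) * (mfalling \<tau> (mi_diff (mi_add k l) i) * b \<tau>)
          else 0)"
proof (cases "i \<le> \<sigma> \<and> mi_diff (mi_add k l) i \<le> \<tau>")
  case True
  let ?m = "mi_diff (mi_add k l) i"
  have "mi_add ?m i = mi_add k l"
  proof
    fix x show "?m x + i x = k x + l x" using le_funD[OF assms(1), of x] by simp
  qed
  then have index: "mi_add (mi_add \<beta> (mi_diff \<sigma> i)) (mi_diff \<tau> ?m) = \<alpha>
      \<longleftrightarrow> mi_add \<beta> (mi_add \<sigma> \<tau>) = mi_add \<alpha> (mi_add k l)"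
    using True by (intro mult_apply_index_eq_iff) auto
  have cancel: "mi_add (mi_diff \<sigma> i) i = \<sigma>" "mi_add (mi_diff \<tau> ?m) ?m = \<tau>"
    using True by (auto intro: iffD2[OF mi_diff_add_cancel_iff])
  show ?thesis
    unfolding y_def mult_apply_fibre_def mult_apply_key_def mult_apply_summand_def mult_summand_def
    by (simp only: prod.case index cancel True assms(1) simp_thms if_True refl)
next
  case False
  then have "mult_apply_key (mult_apply_fibre y i) \<noteq> y"
    unfolding y_def mult_apply_fibre_def mult_apply_key_def using mi_diff_add_cancel_iff by auto
  then show ?thesis using False by auto
qed

lemma Sum_any_mult_apply_fibre:
  "Sum_any (\<lambda>x. if mult_apply_key x = y then mult_apply_summand P Q b \<alpha> x else 0)
     = mult_apply_coeff P Q b \<alpha> y"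
proof -
  obtain k \<beta> l \<sigma> \<tau> where y: "y = (k, \<beta>, l, \<sigma>, \<tau>)" by (metis prod.collapse)
  define f where "f = (\<lambda>x. if mult_apply_key x = y then mult_apply_summand P Q b \<alpha> x else 0)"
  have "inj (mult_apply_fibre y)"
    by (rule injI) (simp add: y mult_apply_fibre_def)
  then have "Sum_any f = Sum_any (f \<circ> mult_apply_fibre y)"
    by (rule Sum_any_reindex) (unfold f_def, rule mult_apply_fibre_covers)
  also have "\<dots> = sum (f \<circ> mult_apply_fibre y) {i. i \<le> k}"
    by (rule Sum_any.expand_superset)
       (auto simp: finite_mi_le f_def y mult_apply_fibre_def mult_apply_summand_def mult_summand_def
             split: if_splits)
  also have "\<dots> = mult_apply_coeff P Q b \<alpha> y"
    unfolding y mult_apply_coeff_def prod.case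
    by (rule sum.cong[OF refl]) (unfold comp_def f_def y, rule mult_apply_summand_fibre, simp)
  finally show ?thesis by (simp add: f_def)
qed

lemma op_apply_op_mult_eq_Sum_any:
  assumes P: "order_le C1 P" and Q: "order_le C2 Q"
  shows "op_apply (op_mult P Q) b \<alpha> = Sum_any (mult_apply_coeff P Q b \<alpha>)"
proof -
  have "apply_summand (op_mult P Q) b \<alpha> s = Sum_any (\<lambda>u. mult_apply_summand P Q b \<alpha> (s, u))" for s
  proof -
    obtain m \<beta>0 \<epsilon>0 where s: "s = (m, \<beta>0, \<epsilon>0)" by (metis prod.collapse)
    have "Sum_any (mult_summand P Q m \<beta>0) * (mfalling (mi_add \<epsilon>0 m) m * b (mi_add \<epsilon>0 m))
        = Sum_any (\<lambda>u. mult_summand P Q m \<beta>0 u * (mfalling (mi_add \<epsilon>0 m) m * b (mi_add \<epsilon>0 m)))"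
      by (rule Sum_any_left_distrib[OF finite_mult_summand[OF P Q]])
    then show ?thesis
      by (simp add: s apply_summand_def mult_apply_summand_def op_mult_eq_Sum_any[OF P Q])
  qed
  then have "op_apply (op_mult P Q) b \<alpha>
      = Sum_any (\<lambda>s. Sum_any (\<lambda>u. mult_apply_summand P Q b \<alpha> (s, u)))"
    by (simp add: op_apply_eq_Sum_any[OF order_le_op_mult[OF P Q]])
  also have "\<dots> = Sum_any (mult_apply_summand P Q b \<alpha>)"
    using Sum_any_nested[OF finite_nonzero_uncurried[OF finite_mult_apply_summand[OF P Q]]]
    by (simp add: case_prod_unfold)
  also have "\<dots> = Sum_any (\<lambda>y. Sum_any (\<lambda>x. if mult_apply_key x = y then mult_apply_summand P Q b \<alpha> x else 0))"
    by (rule Sum_any_fibres[OF finite_mult_apply_summand[OF P Q]])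
  finally show ?thesis by (simp only: Sum_any_mult_apply_fibre)
qed

definition apply_apply_summand :: "('n::finite) dop \<Rightarrow> 'n dop \<Rightarrow> 'n ps \<Rightarrow> 'n mi \<Rightarrow>
    'n apply_index \<times> 'n apply_index \<Rightarrow> complex" where
  "apply_apply_summand P Q b \<alpha> x = (case x of ((k, \<beta>, \<epsilon>), u) \<Rightarrow>
     if mi_add \<beta> \<epsilon> = \<alpha> then (P k \<beta> * mfalling (mi_add \<epsilon> k) k) * apply_summand Q b (mi_add \<epsilon> k) u else 0)"

definition apply_apply_key :: "('n::finite) apply_index \<times> 'n apply_index \<Rightarrow> 'n key" where
  "apply_apply_key x = (case x of ((k, \<beta>, \<epsilon>), (l, \<sigma>, \<epsilon>')) \<Rightarrow> (k, \<beta>, l, \<sigma>, mi_add \<epsilon>' l))"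

definition apply_apply_coeff :: "('n::finite) dop \<Rightarrow> 'n dop \<Rightarrow> 'n ps \<Rightarrow> 'n mi \<Rightarrow> 'n key \<Rightarrow> complex" where
  "apply_apply_coeff P Q b \<alpha> y = (case y of (k, \<beta>, l, \<sigma>, \<tau>) \<Rightarrow>
     if \<beta> \<le> \<alpha> \<and> l \<le> \<tau> \<and> mi_add \<sigma> (mi_diff \<tau> l) = mi_add (mi_diff \<alpha> \<beta>) k
     then (P k \<beta> * mfalling (mi_add (mi_diff \<alpha> \<beta>) k) k) * (Q l \<sigma> * (mfalling \<tau> l * b \<tau>)) else 0)"

lemma finite_apply_apply_summand:
  assumes "order_le C1 P" "order_le C2 Q"
  shows "finite {x. apply_apply_summand P Q b \<alpha> x \<noteq> 0}"
proof (rule finite_subset)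
  let ?B = "deg_atMost (2 * deg \<alpha> + C1 + C2)"
  show "{x. apply_apply_summand P Q b \<alpha> x \<noteq> 0} \<subseteq> (?B \<times> ?B \<times> ?B) \<times> (?B \<times> ?B \<times> ?B)"
  proof
    fix x assume "x \<in> {x. apply_apply_summand P Q b \<alpha> x \<noteq> 0}"
    moreover obtain k \<beta> \<epsilon> l \<beta>' \<epsilon>' where x: "x = ((k, \<beta>, \<epsilon>), (l, \<beta>', \<epsilon>'))" by (metis prod.collapse)
    ultimately have "mi_add \<beta> \<epsilon> = \<alpha>" "P k \<beta> \<noteq> 0" "apply_summand Q b (mi_add \<epsilon> k) (l, \<beta>', \<epsilon>') \<noteq> 0"
      by (auto simp: apply_apply_summand_def split: if_splits)
    moreover from this(3) have "mi_add \<beta>' \<epsilon>' = mi_add \<epsilon> k" "Q l \<beta>' \<noteq> 0"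
      by (auto dest: apply_summand_nonzeroD)
    ultimately have "deg \<alpha> = deg \<beta> + deg \<epsilon>" "deg \<beta>' + deg \<epsilon>' = deg \<epsilon> + deg k"
      "deg k \<le> deg \<beta> + C1" "deg l \<le> deg \<beta>' + C2"
      using assms deg_mi_add unfolding order_le_def by metis+
    then show "x \<in> (?B \<times> ?B \<times> ?B) \<times> (?B \<times> ?B \<times> ?B)" by (simp add: x)
  qed
  show "finite ((?B \<times> ?B \<times> ?B) \<times> (?B \<times> ?B \<times> ?B))" by (simp add: finite_deg_atMost)
qed

lemma Sum_any_apply_apply_fibre:
  "Sum_any (\<lambda>x. if apply_apply_key x = y then apply_apply_summand P Q b \<alpha> x else 0)
     = apply_apply_coeff P Q b \<alpha> y"
proof -
  obtain k \<beta> l \<sigma> \<tau> where y: "y = (k, \<beta>, l, \<sigma>, \<tau>)" by (metis prod.collapse)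
  define f where "f = (\<lambda>x. if apply_apply_key x = y then apply_apply_summand P Q b \<alpha> x else 0)"
  define x0 where "x0 = ((k, \<beta>, mi_diff \<alpha> \<beta>), (l, \<sigma>, mi_diff \<tau> l))"
  have "{x. f x \<noteq> 0} \<subseteq> {x0}"
  proof
    fix x assume "x \<in> {x. f x \<noteq> 0}"
    moreover obtain k' \<beta>' \<epsilon> l' \<sigma>' \<epsilon>' where x: "x = ((k', \<beta>', \<epsilon>), (l', \<sigma>', \<epsilon>'))" by (metis prod.collapse)
    ultimately have "k' = k" "\<beta>' = \<beta>" "l' = l" "\<sigma>' = \<sigma>" "mi_add \<epsilon>' l = \<tau>" "mi_add \<beta> \<epsilon> = \<alpha>"
      by (auto simp: f_def y apply_apply_key_def apply_apply_summand_def split: if_splits)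
    then show "x \<in> {x0}" by (auto simp: x x0_def dest: mi_diff_eq_if_add_eq)
  qed
  then have "Sum_any f = f x0"
    by (simp add: Sum_any.expand_superset[of "{x0}"])
  also have "\<dots> = apply_apply_coeff P Q b \<alpha> y"
  proof (cases "\<beta> \<le> \<alpha> \<and> l \<le> \<tau>")
    case True
    then have "mi_add \<beta> (mi_diff \<alpha> \<beta>) = \<alpha>" "mi_add (mi_diff \<tau> l) l = \<tau>"
      using mi_add_diff_cancel_iff mi_diff_add_cancel_iff by blast+
    then show ?thesis using True
      by (simp add: f_def x0_def y apply_apply_key_def apply_apply_summand_def apply_apply_coeff_def
          apply_summand_def mult.assoc)
  next
    case False
    then have "apply_apply_key x0 \<noteq> y \<or> mi_add \<beta> (mi_diff \<alpha> \<beta>) \<noteq> \<alpha>"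
      using mi_add_diff_cancel_iff mi_diff_add_cancel_iff by (auto simp: x0_def y apply_apply_key_def)
    then show ?thesis using False
      by (auto simp: f_def x0_def y apply_apply_summand_def apply_apply_coeff_def)
  qed
  finally show ?thesis by (simp add: f_def)
qed

lemma op_apply_op_apply_eq_Sum_any:
  assumes P: "order_le C1 P" and Q: "order_le C2 Q"
  shows "op_apply P (op_apply Q b) \<alpha> = Sum_any (apply_apply_coeff P Q b \<alpha>)"
proof -
  have "apply_summand P (op_apply Q b) \<alpha> s = Sum_any (\<lambda>u. apply_apply_summand P Q b \<alpha> (s, u))" for s
  proof -
    obtain k \<beta> \<epsilon> where s: "s = (k, \<beta>, \<epsilon>)" by (metis prod.collapse)
    have "(P k \<beta> * mfalling (mi_add \<epsilon> k) k) * Sum_any (apply_summand Q b (mi_add \<epsilon> k))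
        = Sum_any (\<lambda>u. (P k \<beta> * mfalling (mi_add \<epsilon> k) k) * apply_summand Q b (mi_add \<epsilon> k) u)"
      by (rule Sum_any_right_distrib[OF finite_apply_summand[OF Q]])
    then show ?thesis
      by (simp add: s apply_summand_def apply_apply_summand_def op_apply_eq_Sum_any[OF Q] mult.assoc)
  qed
  then have "op_apply P (op_apply Q b) \<alpha>
      = Sum_any (\<lambda>s. Sum_any (\<lambda>u. apply_apply_summand P Q b \<alpha> (s, u)))"
    by (simp add: op_apply_eq_Sum_any[OF P])
  also have "\<dots> = Sum_any (apply_apply_summand P Q b \<alpha>)"
    using Sum_any_nested[OF finite_nonzero_uncurried[OF finite_apply_apply_summand[OF P Q]]]
    by (simp add: case_prod_unfold)
  also have "\<dots> = Sum_any (\<lambda>y. Sum_any (\<lambda>x. if apply_apply_key x = y then apply_apply_summand P Q b \<alpha> x else 0))"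
    by (rule Sum_any_fibres[OF finite_apply_apply_summand[OF P Q]])
  finally show ?thesis by (simp only: Sum_any_apply_apply_fibre)
qed

lemma apply_apply_index_eq_iff:
  fixes \<beta> \<alpha> l \<tau> \<sigma> k :: "('n::finite) mi"
  assumes "\<beta> \<le> \<alpha>" "l \<le> \<tau>"
  shows "mi_add \<sigma> (mi_diff \<tau> l) = mi_add (mi_diff \<alpha> \<beta>) k
     \<longleftrightarrow> mi_add \<beta> (mi_add \<sigma> \<tau>) = mi_add \<alpha> (mi_add k l)"
proof -
  have h: "\<beta> x \<le> \<alpha> x" "l x \<le> \<tau> x" for x using assms by (auto simp: le_fun_def)
  have "(\<sigma> x + (\<tau> x - l x) = \<alpha> x - \<beta> x + k x) \<longleftrightarrow> (\<beta> x + (\<sigma> x + \<tau> x) = \<alpha> x + (k x + l x))" for x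
    using h[of x] by linarith
  then show ?thesis by (simp add: fun_eq_iff)
qed

lemma apply_apply_index_eq:
  fixes \<beta> \<alpha> l \<tau> \<sigma> k :: "('n::finite) mi"
  assumes "\<beta> \<le> \<alpha>" "l \<le> \<tau>" "mi_add \<beta> (mi_add \<sigma> \<tau>) = mi_add \<alpha> (mi_add k l)"
  shows "mi_add (mi_diff \<alpha> \<beta>) k = mi_diff (mi_add \<sigma> \<tau>) l"
proof
  fix x
  have "\<beta> x \<le> \<alpha> x" "l x \<le> \<tau> x" using assms by (auto simp: le_fun_def)
  moreover have "\<beta> x + (\<sigma> x + \<tau> x) = \<alpha> x + (k x + l x)" using fun_cong[OF assms(3), of x] by simp
  ultimately show "\<alpha> x - \<beta> x + k x = \<sigma> x + \<tau> x - l x" by linarith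
qed

lemma mult_apply_index_le:
  fixes \<beta> \<alpha> l \<tau> \<sigma> k i :: "('n::finite) mi"
  assumes "i \<le> k" "mi_add \<beta> (mi_add \<sigma> \<tau>) = mi_add \<alpha> (mi_add k l)"
    "i \<le> \<sigma>" "mi_diff (mi_add k l) i \<le> \<tau>"
  shows "\<beta> \<le> \<alpha> \<and> l \<le> \<tau>"
proof -
  have "\<beta> x \<le> \<alpha> x \<and> l x \<le> \<tau> x" for x
  proof -
    have "i x \<le> k x" "i x \<le> \<sigma> x" "k x + l x - i x \<le> \<tau> x" using assms by (auto simp: le_fun_def)
    moreover have "\<beta> x + (\<sigma> x + \<tau> x) = \<alpha> x + (k x + l x)" using fun_cong[OF assms(2), of x] by simp
    ultimately show ?thesis by linarith
  qed
  then show ?thesis by (auto simp: le_fun_def)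
qed

lemma mult_apply_coeff_factor:
  "mult_apply_coeff P Q b \<alpha> (k, \<beta>, l, \<sigma>, \<tau>) =
     (if mi_add \<beta> (mi_add \<sigma> \<tau>) = mi_add \<alpha> (mi_add k l)
      then (\<Sum>i\<in>{i. i \<le> k}. mbinom k i * mfalling \<sigma> i * mfalling \<tau> (mi_diff (mi_add k l) i))
           * (P k \<beta> * Q l \<sigma> * b \<tau>)
      else 0)"
proof -
  have "(if E \<and> i \<le> \<sigma> \<and> mi_diff (mi_add k l) i \<le> \<tau>
        then mbinom k i * (P k \<beta> * (mfalling \<sigma> i * Q l \<sigma>)) * (mfalling \<tau> (mi_diff (mi_add k l) i) * b \<tau>)
        else 0)
      = (if E then mbinom k i * mfalling \<sigma> i * mfalling \<tau> (mi_diff (mi_add k l) i) * (P k \<beta> * Q l \<sigma> * b \<tau>)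
         else 0)" for E i
    by (auto simp: mfalling_eq_0 mult_ac)
  then show ?thesis
    by (simp add: mult_apply_coeff_def sum_distrib_right)
qed

lemma mult_apply_coeff_eq_apply_apply_coeff:
  "mult_apply_coeff P Q b \<alpha> y = apply_apply_coeff P Q b \<alpha> y"
proof -
  obtain k \<beta> l \<sigma> \<tau> where y: "y = (k, \<beta>, l, \<sigma>, \<tau>)" by (metis prod.collapse)
  define E where "E \<longleftrightarrow> mi_add \<beta> (mi_add \<sigma> \<tau>) = mi_add \<alpha> (mi_add k l)"
  define c where "c i = mbinom k i * mfalling \<sigma> i * mfalling \<tau> (mi_diff (mi_add k l) i)" for i
  have coeff: "mult_apply_coeff P Q b \<alpha> (k, \<beta>, l, \<sigma>, \<tau>) = (if E then sum c {i. i \<le> k} * (P k \<beta> * Q l \<sigma> * b \<tau>) else 0)"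
    unfolding mult_apply_coeff_factor E_def c_def ..
  consider "E" "\<beta> \<le> \<alpha>" "l \<le> \<tau>" | "\<not> E" | "E" "\<not> (\<beta> \<le> \<alpha> \<and> l \<le> \<tau>)" by blast
  then show ?thesis
  proof cases
    case 1
    then have "sum c {i. i \<le> k} = mfalling (mi_diff (mi_add \<sigma> \<tau>) l) k * mfalling \<tau> l"
      unfolding c_def by (intro mfalling_Leibniz)
    moreover have "mi_add \<sigma> (mi_diff \<tau> l) = mi_add (mi_diff \<alpha> \<beta>) k"
      using 1 apply_apply_index_eq_iff unfolding E_def by blast
    moreover have "mi_add (mi_diff \<alpha> \<beta>) k = mi_diff (mi_add \<sigma> \<tau>) l"
      using 1 apply_apply_index_eq unfolding E_def by blast
    ultimately show ?thesis
      using 1 by (simp add: y coeff apply_apply_coeff_def mult_ac)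
  next
    case 2
    then show ?thesis
      unfolding y coeff apply_apply_coeff_def E_def by (auto simp: apply_apply_index_eq_iff)
  next
    case 3
    have "c i = 0" if "i \<le> k" for i
    proof (cases "i \<le> \<sigma> \<and> mi_diff (mi_add k l) i \<le> \<tau>")
      case True
      then have "\<beta> \<le> \<alpha> \<and> l \<le> \<tau>"
        using mult_apply_index_le[OF that] 3 unfolding E_def by blast
      with 3 show ?thesis by blast
    next
      case False
      then show ?thesis unfolding c_def using mfalling_eq_0 by auto
    qed
    then show ?thesis
      using 3 by (auto simp: y coeff apply_apply_coeff_def)
  qed
qed

lemma op_apply_op_mult:
  assumes "P \<in> S_set" "Q \<in> S_set"
  shows "op_apply (op_mult P Q) = op_apply P \<circ> op_apply Q"
proof -
  obtain C1 C2 where "order_le C1 P" "order_le C2 Q"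
    using assms order_le_if_S_set by metis
  then show ?thesis
    by (simp add: fun_eq_iff op_apply_op_mult_eq_Sum_any op_apply_op_apply_eq_Sum_any
        mult_apply_coeff_eq_apply_apply_coeff)
qed

section \<open>The action as a faithful representation by continuous endomorphisms\<close>

lemma op_apply_add_arg:
  assumes "P \<in> S_set"
  shows "op_apply P (\<lambda>\<alpha>. b \<alpha> + c \<alpha>) = (\<lambda>\<alpha>. op_apply P b \<alpha> + op_apply P c \<alpha>)"
proof
  fix \<alpha>
  obtain C where C: "order_le C P" using order_le_if_S_set[OF assms] .
  have "apply_summand P (\<lambda>\<alpha>. b \<alpha> + c \<alpha>) \<alpha> = (\<lambda>t. apply_summand P b \<alpha> t + apply_summand P c \<alpha> t)"
    by (simp add: fun_eq_iff apply_summand_def algebra_simps split: prod.split)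
  then show "op_apply P (\<lambda>\<alpha>. b \<alpha> + c \<alpha>) \<alpha> = op_apply P b \<alpha> + op_apply P c \<alpha>"
    by (simp add: op_apply_eq_Sum_any[OF C] Sum_any.distrib finite_apply_summand[OF C])
qed

lemma op_apply_smult_arg:
  assumes "P \<in> S_set"
  shows "op_apply P (\<lambda>\<alpha>. s * b \<alpha>) = (\<lambda>\<alpha>. s * op_apply P b \<alpha>)"
proof
  fix \<alpha>
  obtain C where C: "order_le C P" using order_le_if_S_set[OF assms] .
  have "apply_summand P (\<lambda>\<alpha>. s * b \<alpha>) \<alpha> = (\<lambda>t. s * apply_summand P b \<alpha> t)"
    by (simp add: fun_eq_iff apply_summand_def algebra_simps split: prod.split)
  then show "op_apply P (\<lambda>\<alpha>. s * b \<alpha>) \<alpha> = s * op_apply P b \<alpha>"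
    by (simp add: op_apply_eq_Sum_any[OF C] Sum_any_right_distrib finite_apply_summand[OF C])
qed

lemma op_apply_diff_arg:
  assumes "P \<in> S_set"
  shows "op_apply P (\<lambda>\<alpha>. c \<alpha> - b \<alpha>) = (\<lambda>\<alpha>. op_apply P c \<alpha> - op_apply P b \<alpha>)"
proof -
  have "op_apply P (\<lambda>\<alpha>. c \<alpha> - b \<alpha>) = op_apply P (\<lambda>\<alpha>. c \<alpha> + (-1) * b \<alpha>)" by simp
  also have "\<dots> = (\<lambda>\<alpha>. op_apply P c \<alpha> + op_apply P (\<lambda>\<alpha>. (-1) * b \<alpha>) \<alpha>)"
    by (rule op_apply_add_arg[OF assms])
  also have "\<dots> = (\<lambda>\<alpha>. op_apply P c \<alpha> - op_apply P b \<alpha>)"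
    by (simp only: op_apply_smult_arg[OF assms]) simp
  finally show ?thesis .
qed

lemma op_apply_op_add:
  assumes "P \<in> S_set" "Q \<in> S_set"
  shows "op_apply (op_add P Q) = (\<lambda>b \<alpha>. op_apply P b \<alpha> + op_apply Q b \<alpha>)"
proof (intro ext)
  fix b \<alpha>
  obtain C1 C2 where C: "order_le C1 P" "order_le C2 Q"
    using assms order_le_if_S_set by metis
  have "apply_summand (op_add P Q) b \<alpha> = (\<lambda>t. apply_summand P b \<alpha> t + apply_summand Q b \<alpha> t)"
    by (simp add: fun_eq_iff apply_summand_def op_add_def algebra_simps split: prod.split)
  then show "op_apply (op_add P Q) b \<alpha> = op_apply P b \<alpha> + op_apply Q b \<alpha>"
    by (simp add: op_apply_eq_Sum_any[OF order_le_op_add[OF C]] op_apply_eq_Sum_any[OF C(1)]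
        op_apply_eq_Sum_any[OF C(2)] Sum_any.distrib finite_apply_summand[OF C(1)] finite_apply_summand[OF C(2)])
qed

lemma op_apply_op_smult:
  assumes "P \<in> S_set"
  shows "op_apply (op_smult s P) = (\<lambda>b \<alpha>. s * op_apply P b \<alpha>)"
proof (intro ext)
  fix b \<alpha>
  obtain C where C: "order_le C P" using order_le_if_S_set[OF assms] .
  have "apply_summand (op_smult s P) b \<alpha> = (\<lambda>t. s * apply_summand P b \<alpha> t)"
    by (simp add: fun_eq_iff apply_summand_def op_smult_def algebra_simps split: prod.split)
  then show "op_apply (op_smult s P) b \<alpha> = s * op_apply P b \<alpha>"
    by (simp add: op_apply_eq_Sum_any[OF order_le_op_smult[OF C]] op_apply_eq_Sum_any[OF C]
        Sum_any_right_distrib finite_apply_summand[OF C])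
qed

lemma op_apply_op_one: "op_apply op_one = id"
proof (intro ext)
  fix b and \<alpha> :: "'n::finite mi"
  have "apply_summand op_one b \<alpha> t = (if t = ((\<lambda>_. 0), (\<lambda>_. 0), \<alpha>) then b \<alpha> else 0)" for t
  proof -
    obtain k \<beta> \<epsilon> where t: "t = (k, \<beta>, \<epsilon>)" by (metis prod.collapse)
    show ?thesis
      by (cases "k = (\<lambda>_. 0) \<and> \<beta> = (\<lambda>_. 0)")
         (auto simp: t apply_summand_def op_one_def coeff_op_def mi_zero_def ps_zero_def)
  qed
  then show "op_apply op_one b \<alpha> = id b \<alpha>"
    by (simp add: op_apply_eq_Sum_any[OF order_le_op_one])
qed

lemma op_apply_monomial_minimal:
  assumes R: "order_le C R" and min: "\<And>k' \<beta>'. R k' \<beta>' \<noteq> 0 \<Longrightarrow> deg k \<le> deg k'"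
  shows "op_apply R (\<lambda>\<gamma>. if \<gamma> = k then 1 else 0) \<beta> = R k \<beta> * mfalling k k"
proof -
  let ?e = "\<lambda>\<gamma>. if \<gamma> = k then 1 else 0"
  have "apply_summand R ?e \<beta> t = (if t = (k, \<beta>, (\<lambda>_. 0)) then R k \<beta> * mfalling k k else 0)" for t
  proof (cases "apply_summand R ?e \<beta> t = 0")
    case False
    obtain k' \<beta>' \<epsilon> where t: "t = (k', \<beta>', \<epsilon>)" by (metis prod.collapse)
    with False have h: "mi_add \<beta>' \<epsilon> = \<beta>" "R k' \<beta>' \<noteq> 0" "mi_add \<epsilon> k' = k"
      by (auto simp: apply_summand_def split: if_splits)
    have "deg \<epsilon> + deg k' = deg k" using h(3) deg_mi_add by metis
    with min[OF h(2)] have "\<epsilon> = (\<lambda>_. 0)"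
      using deg_eq_0_iff[of \<epsilon>] unfolding mi_zero_def by simp
    with h show ?thesis by (auto simp: t apply_summand_def)
  next
    case True
    then show ?thesis by (auto simp: apply_summand_def mfalling_self_nonzero)
  qed
  then show ?thesis by (simp add: op_apply_eq_Sum_any[OF R])
qed

lemma op_apply_eq_0_imp_zero:
  assumes R: "order_le C R" and zero: "\<And>b. op_apply R b = (\<lambda>\<alpha>. 0)"
  shows "R k \<beta> = 0"
proof (rule ccontr)
  assume "R k \<beta> \<noteq> 0"
  then obtain k0 \<beta>0 where nz: "R k0 \<beta>0 \<noteq> 0" and min: "\<And>k' \<beta>'. R k' \<beta>' \<noteq> 0 \<Longrightarrow> deg k0 \<le> deg k'"
    using ex_has_least_nat[of "\<lambda>(k, \<beta>). R k \<beta> \<noteq> 0" "(k, \<beta>)" "\<lambda>(k, \<beta>). deg k"] by auto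
  have "op_apply R (\<lambda>\<gamma>. if \<gamma> = k0 then 1 else 0) \<beta>0 = R k0 \<beta>0 * mfalling k0 k0"
    by (rule op_apply_monomial_minimal[OF R]) (use min in blast)
  with nz zero show False by (simp add: mfalling_self_nonzero)
qed

lemma inj_on_op_apply: "inj_on op_apply S_set"
proof
  fix P Q assume P: "P \<in> S_set" and Q: "Q \<in> S_set" and eq: "op_apply P = op_apply Q"
  obtain C1 C2 where C: "order_le C1 P" "order_le C2 Q"
    using P Q order_le_if_S_set by metis
  let ?R = "op_add P (op_smult (-1) Q)"
  have "op_apply ?R b = (\<lambda>\<alpha>. 0)" for b
    using op_apply_op_add[OF P S_set_if_order_le[OF order_le_op_smult[OF C(2)]]]
      op_apply_op_smult[OF Q] eq by simp
  then have "?R k \<beta> = 0" for k \<beta>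
    using op_apply_eq_0_imp_zero[OF order_le_op_add[OF C(1) order_le_op_smult[OF C(2)]]] by blast
  then show "P = Q" by (simp add: fun_eq_iff op_add_def op_smult_def)
qed

lemma madic_continuous_op_apply:
  fixes P :: "('n::finite) dop"
  assumes "P \<in> S_set"
  shows "madic_continuous (op_apply P)"
  unfolding madic_continuous_def
proof (intro allI)
  fix b :: "'n ps" and N :: nat
  obtain C where C: "order_le C P" using order_le_if_S_set[OF assms] .
  have "enat N \<le> mval (\<lambda>\<alpha>. op_apply P c \<alpha> - op_apply P b \<alpha>)"
    if "enat (N + C) \<le> mval (\<lambda>\<alpha>. c \<alpha> - b \<alpha>)" for c
  proof -
    have close: "N + C \<le> deg \<alpha>" if "c \<alpha> - b \<alpha> \<noteq> 0" for \<alpha>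
      using \<open>enat (N + C) \<le> _\<close> that by (simp add: enat_le_mval_iff)
    have "N \<le> deg \<alpha>" if "op_apply P (\<lambda>\<alpha>. c \<alpha> - b \<alpha>) \<alpha> \<noteq> 0" for \<alpha>
    proof -
      have "Sum_any (apply_summand P (\<lambda>\<alpha>. c \<alpha> - b \<alpha>) \<alpha>) \<noteq> 0"
        using that by (simp add: op_apply_eq_Sum_any[OF C])
      then obtain t where "apply_summand P (\<lambda>\<alpha>. c \<alpha> - b \<alpha>) \<alpha> t \<noteq> 0"
        by (rule Sum_any.not_neutral_obtains_not_neutral)
      moreover obtain k \<beta> \<epsilon> where "t = (k, \<beta>, \<epsilon>)" by (metis prod.collapse)
      ultimately have h: "mi_add \<beta> \<epsilon> = \<alpha>" "P k \<beta> \<noteq> 0" "c (mi_add \<epsilon> k) - b (mi_add \<epsilon> k) \<noteq> 0"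
        by (auto simp: apply_summand_def split: if_splits)
      have "deg \<alpha> = deg \<beta> + deg \<epsilon>" using h deg_mi_add by metis
      moreover have "deg k \<le> deg \<beta> + C" using C h unfolding order_le_def by blast
      moreover have "N + C \<le> deg \<epsilon> + deg k" using close[OF h(3)] deg_mi_add by metis
      ultimately show ?thesis by linarith
    qed
    then show ?thesis
      unfolding enat_le_mval_iff op_apply_diff_arg[OF assms, symmetric] by blast
  qed
  then show "\<exists>M. \<forall>c. enat M \<le> mval (\<lambda>\<alpha>. c \<alpha> - b \<alpha>) \<longrightarrow> enat N \<le> mval (\<lambda>\<alpha>. op_apply P c \<alpha> - op_apply P b \<alpha>)"
    by blast
qed

lemma linear_endo_op_apply: "P \<in> S_set \<Longrightarrow> linear_endo (op_apply P)"
  unfolding linear_endo_def using op_apply_add_arg op_apply_smult_arg by blast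

section \<open>The algebra \<open>\<SS>\<close> and its subalgebra \<open>\<D>\<close>\<close>

lemma S_ring_simps [simp]:
  "carrier S_ring = S_set" "monoid.mult S_ring = op_mult" "monoid.one S_ring = op_one"
  "ring.zero S_ring = op_zero" "ring.add S_ring = op_add" "module.smult S_ring = op_smult"
  by (simp_all add: S_ring_def)

lemma CC_simps [simp]:
  "carrier CC = UNIV" "monoid.mult CC = (*)" "monoid.one CC = 1" "ring.zero CC = 0" "ring.add CC = (+)"
  by (simp_all add: CC_def)

lemma op_add_in_S_set: "P \<in> S_set \<Longrightarrow> Q \<in> S_set \<Longrightarrow> op_add P Q \<in> S_set"
  by (meson order_le_if_S_set S_set_if_order_le order_le_op_add)

lemma op_mult_in_S_set: "P \<in> S_set \<Longrightarrow> Q \<in> S_set \<Longrightarrow> op_mult P Q \<in> S_set"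
  by (meson order_le_if_S_set S_set_if_order_le order_le_op_mult)

lemma op_smult_in_S_set: "P \<in> S_set \<Longrightarrow> op_smult c P \<in> S_set"
  by (meson order_le_if_S_set S_set_if_order_le order_le_op_smult)

lemma op_zero_in_S_set: "op_zero \<in> S_set"
  by (rule S_set_if_order_le[of 0]) (simp add: order_le_def op_zero_def)

lemma op_one_in_S_set: "op_one \<in> S_set"
  by (rule S_set_if_order_le[OF order_le_op_one])

lemmas S_set_closed = op_add_in_S_set op_mult_in_S_set op_smult_in_S_set op_zero_in_S_set op_one_in_S_set

lemma abelian_group_S_ring: "abelian_group (S_ring :: (complex, ('n::finite) dop) module)"
proof (rule abelian_groupI, simp_all add: S_set_closed)
  fix x y z :: "'n dop"
  show "op_add (op_add x y) z = op_add x (op_add y z)" "op_add x y = op_add y x"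
    "op_add op_zero x = x"
    by (simp_all add: op_add_def op_zero_def algebra_simps)
next
  fix x :: "'n dop" assume "x \<in> S_set"
  then show "\<exists>y\<in>S_set. op_add y x = op_zero"
    by (intro bexI[of _ "op_smult (-1) x"]) (simp add: op_add_def op_smult_def op_zero_def, rule S_set_closed)
qed

lemma monoid_S_ring: "monoid (S_ring :: (complex, ('n::finite) dop) module)"
proof (rule monoidI, simp_all add: S_set_closed)
  fix x y z :: "'n dop" assume "x \<in> S_set" "y \<in> S_set" "z \<in> S_set"
  then show "op_mult (op_mult x y) z = op_mult x (op_mult y z)"
    by (intro inj_onD[OF inj_on_op_apply]) (simp_all add: S_set_closed op_apply_op_mult comp_assoc)
next
  fix x :: "'n dop" assume "x \<in> S_set"
  then show "op_mult op_one x = x" "op_mult x op_one = x"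
    by (intro inj_onD[OF inj_on_op_apply]; simp add: S_set_closed op_apply_op_mult op_apply_op_one)+
qed

lemma ring_S_ring: "ring (S_ring :: (complex, ('n::finite) dop) module)"
proof (rule ringI[OF abelian_group_S_ring monoid_S_ring], simp_all)
  fix x y z :: "'n dop" assume "x \<in> S_set" "y \<in> S_set" "z \<in> S_set"
  then show "op_mult (op_add x y) z = op_add (op_mult x z) (op_mult y z)"
    "op_mult z (op_add x y) = op_add (op_mult z x) (op_mult z y)"
    by (intro inj_onD[OF inj_on_op_apply];
        simp add: fun_eq_iff S_set_closed op_apply_op_mult op_apply_op_add op_apply_add_arg)+
qed

lemma cring_CC: "cring CC"
proof (rule cringI)
  show "abelian_group CC"
    by (rule abelian_groupI) (auto simp: algebra_simps intro: exI[of _ "- x" for x] bexI[of _ "- x" for x])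
  show "Group.comm_monoid CC"
    by (rule comm_monoidI) (auto simp: algebra_simps)
qed (simp add: algebra_simps)

lemma module_S_ring: "module CC (S_ring :: (complex, ('n::finite) dop) module)"
proof (rule moduleI[OF cring_CC abelian_group_S_ring], simp_all add: op_smult_in_S_set)
  fix a b :: complex and x y :: "'n dop"
  show "op_smult (a + b) x = op_add (op_smult a x) (op_smult b x)"
    "op_smult a (op_add x y) = op_add (op_smult a x) (op_smult a y)"
    "op_smult (a * b) x = op_smult a (op_smult b x)" "op_smult 1 x = x"
    by (simp_all add: op_smult_def op_add_def algebra_simps)
qed

lemma op_smult_op_mult:
  assumes "P \<in> S_set" "Q \<in> S_set"
  shows "op_smult c (op_mult P Q) = op_mult (op_smult c P) Q"
    and "op_smult c (op_mult P Q) = op_mult P (op_smult c Q)"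
  using assms
  by (intro inj_onD[OF inj_on_op_apply];
      simp add: fun_eq_iff S_set_closed op_apply_op_mult op_apply_op_smult op_apply_smult_arg)+

lemma D_set_subset_S_set: "D_set \<subseteq> S_set"
proof
  fix P assume "P \<in> D_set"
  then obtain C where C: "\<forall>k\<in>{k. P k \<noteq> ps_zero}. deg k \<le> C"
    using finite_deg_bounded unfolding D_set_def by blast
  have "order_le C P"
    unfolding order_le_def
  proof (intro allI impI)
    fix k \<beta> assume "P k \<beta> \<noteq> 0"
    then have "P k \<noteq> ps_zero" by (auto simp: ps_zero_def)
    then show "deg k \<le> deg \<beta> + C" using C by auto
  qed
  then show "P \<in> S_set" by (rule S_set_if_order_le)
qed

lemma op_smult_in_D_set: "P \<in> D_set \<Longrightarrow> op_smult c P \<in> D_set"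
  unfolding D_set_def mem_Collect_eq
  by (rule finite_subset[rotated], assumption) (auto simp: op_smult_def ps_zero_def fun_eq_iff)

lemma op_add_in_D_set: "P \<in> D_set \<Longrightarrow> Q \<in> D_set \<Longrightarrow> op_add P Q \<in> D_set"
  unfolding D_set_def mem_Collect_eq
  by (rule finite_subset[of _ "{k. P k \<noteq> ps_zero} \<union> {k. Q k \<noteq> ps_zero}"])
     (auto simp: op_add_def ps_zero_def fun_eq_iff)

lemma op_one_in_D_set: "op_one \<in> D_set"
  unfolding D_set_def mem_Collect_eq
  by (rule finite_subset[of _ "{mi_zero}"]) (auto simp: op_one_def coeff_op_def)

lemma op_mult_in_D_set:
  assumes P: "P \<in> D_set" and Q: "Q \<in> D_set"
  shows "op_mult P Q \<in> D_set"
proof -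
  let ?FP = "{k. P k \<noteq> ps_zero}" and ?FQ = "{k. Q k \<noteq> ps_zero}"
  let ?T = "?FP \<times> ?FQ \<times> (\<Union>k\<in>?FP. {i. i \<le> k})"
  have "{m. op_mult P Q m \<noteq> ps_zero} \<subseteq> (\<lambda>(k, l, i). mi_diff (mi_add k l) i) ` ?T"
  proof
    fix m assume "m \<in> {m. op_mult P Q m \<noteq> ps_zero}"
    then obtain \<alpha> where "op_mult P Q m \<alpha> \<noteq> 0" by (auto simp: ps_zero_def fun_eq_iff)
    then have "Sum_any (leib_term P Q m \<alpha>) \<noteq> 0" by (simp add: op_mult_def Sum_any.expand_set)
    then obtain t where "leib_term P Q m \<alpha> t \<noteq> 0" by (rule Sum_any.not_neutral_obtains_not_neutral)
    moreover obtain k l i where t: "t = (k, l, i)" by (metis prod.collapse)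
    ultimately have h: "i \<le> k" "mi_diff (mi_add k l) i = m" "ps_mult (P k) (ps_deriv i (Q l)) \<alpha> \<noteq> 0"
      by (auto simp: leib_term_def split: if_splits)
    obtain \<beta> where "P k \<beta> \<noteq> 0" "ps_deriv i (Q l) (mi_diff \<alpha> \<beta>) \<noteq> 0"
      using ps_mult_nonzeroD[OF h(3)] by blast
    then have "P k \<noteq> ps_zero" "Q l \<noteq> ps_zero" by (auto simp: ps_zero_def ps_deriv_def)
    then show "m \<in> (\<lambda>(k, l, i). mi_diff (mi_add k l) i) ` ?T"
      using h by (auto intro!: image_eqI[of _ _ "(k, l, i)"])
  qed
  moreover have "finite ?T" using P Q by (simp add: D_set_def finite_mi_le)
  ultimately show ?thesis by (simp add: D_set_def finite_surj)
qed

lemma a_inv_S_ring: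
  assumes "x \<in> S_set"
  shows "a_inv (S_ring :: (complex, ('n::finite) dop) module) x = op_smult (-1) x"
proof (rule abelian_group.minus_equality[OF abelian_group_S_ring])
  show "op_smult (-1) x \<oplus>\<^bsub>S_ring\<^esub> x = \<zero>\<^bsub>S_ring\<^esub>"
    by (simp add: op_add_def op_smult_def op_zero_def)
qed (simp_all add: assms op_smult_in_S_set)

lemma subring_D_set: "subring D_set (S_ring :: (complex, ('n::finite) dop) module)"
  using D_set_subset_S_set
  by (intro ring.subringI[OF ring_S_ring])
     (auto simp: op_one_in_D_set op_add_in_D_set op_mult_in_D_set a_inv_S_ring op_smult_in_D_set)

lemma op_apply_eq_D_action:
  assumes "P \<in> D_set"
  shows "op_apply P = D_action P"
proof (intro ext)
  fix b \<alpha>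
  have "Sum_any (app_term P b \<alpha>) = sum (app_term P b \<alpha>) {k. P k \<noteq> ps_zero}"
    using assms by (intro Sum_any.expand_superset) (auto simp: D_set_def app_term_def ps_zero_def ps_mult_def)
  then show "op_apply P b \<alpha> = D_action P b \<alpha>"
    by (simp add: op_apply_def D_action_def app_term_def Sum_any.expand_set)
qed

section \<open>The quotient \<open>\<SS> / \<mm>\<SS>\<close>\<close>

lemma const_map_image_S_set: "const_map ` (S_set :: ('n::finite) dop set) = poly_set"
proof
  show "const_map ` (S_set :: 'n dop set) \<subseteq> poly_set"
  proof
    fix c assume "c \<in> const_map ` (S_set :: 'n dop set)"
    then obtain P :: "'n dop" where P: "P \<in> S_set" "c = const_map P" by blast
    obtain C where C: "order_le C P" using order_le_if_S_set[OF P(1)] .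
    have "{k. c k \<noteq> 0} \<subseteq> deg_atMost C"
    proof
      fix k assume "k \<in> {k. c k \<noteq> 0}"
      then have "P k mi_zero \<noteq> 0" by (simp add: P const_map_def)
      then have "deg k \<le> deg (mi_zero :: 'n mi) + C" using C unfolding order_le_def by blast
      then show "k \<in> deg_atMost C" by simp
    qed
    then show "c \<in> poly_set" unfolding poly_set_def using finite_deg_atMost finite_subset by blast
  qed
  show "poly_set \<subseteq> const_map ` (S_set :: 'n dop set)"
  proof
    fix c :: "'n mi \<Rightarrow> complex" assume "c \<in> poly_set"
    then obtain C where C: "\<forall>k\<in>{k. c k \<noteq> 0}. deg k \<le> C"
      using finite_deg_bounded unfolding poly_set_def by blast
    define P :: "'n dop" where "P = (\<lambda>k \<alpha>. if \<alpha> = mi_zero then c k else 0)"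
    have "order_le C P" using C by (auto simp: order_le_def P_def split: if_splits)
    moreover have "const_map P = c" by (simp add: const_map_def P_def)
    ultimately show "c \<in> const_map ` S_set" using S_set_if_order_le by blast
  qed
qed

lemma const_map_op_add: "const_map (op_add P Q) = (\<lambda>k. const_map P k + const_map Q k)"
  by (simp add: const_map_def op_add_def)

lemma const_map_op_smult: "const_map (op_smult c P) = (\<lambda>k. c * const_map P k)"
  by (simp add: const_map_def op_smult_def)

lemma op_mult_coeff_op: "op_mult (coeff_op f) P k \<alpha> = ps_mult f (P k) \<alpha>"
proof -
  have "leib_term (coeff_op f) P k \<alpha> t = (if t = ((\<lambda>_. 0), k, (\<lambda>_. 0)) then ps_mult f (P k) \<alpha> else 0)" for t
  proof -
    obtain k' l i where t: "t = (k', l, i)" by (metis prod.collapse)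
    show ?thesis
    proof (cases "k' = (\<lambda>_. 0) \<and> i \<le> k'")
      case True
      then have "i = (\<lambda>_. 0)" by (auto simp: le_fun_def fun_eq_iff)
      moreover have "mbinom (\<lambda>_. 0) (\<lambda>_. 0) = 1" by (simp add: mbinom_def)
      moreover have "ps_deriv (\<lambda>_. 0) (P l) = P l" by (simp add: ps_deriv_def)
      ultimately show ?thesis
        using True by (auto simp: t leib_term_def coeff_op_def mi_zero_def)
    next
      case False
      then show ?thesis
        by (auto simp: t leib_term_def coeff_op_def mi_zero_def ps_mult_def ps_zero_def)
    qed
  qed
  then show ?thesis by (simp add: op_mult_def Sum_any.expand_set[symmetric])
qed

lemma ps_mult_at_zero: "ps_mult a c (\<lambda>_. 0) = a (\<lambda>_. 0) * c (\<lambda>_. 0)"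
proof -
  have zero: "{\<beta>. \<beta> \<le> (\<lambda>_. 0::nat)} = {(\<lambda>_. 0)}" by (auto simp: le_fun_def fun_eq_iff)
  show ?thesis unfolding ps_mult_def zero by simp
qed

lemma mS_set_subset: "mS_set \<subseteq> {P \<in> S_set. const_map P = (\<lambda>_. 0)}"
proof
  fix Q assume "Q \<in> mS_set"
  then obtain N :: nat and f P where fP: "\<forall>t<N. f t \<in> max_ideal \<and> P t \<in> S_set"
    and Q: "Q = (\<lambda>k \<alpha>. \<Sum>t<N. ps_mult (f t) (P t k) \<alpha>)"
    unfolding mS_set_def by (auto simp: op_mult_coeff_op)
  have "\<forall>t. \<exists>C. t < N \<longrightarrow> order_le C (P t)" using fP order_le_if_S_set by metis
  then obtain Cf where Cf: "\<And>t. t < N \<Longrightarrow> order_le (Cf t) (P t)" by metis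
  have "order_le (\<Sum>t<N. Cf t) Q"
    unfolding order_le_def
  proof (intro allI impI)
    fix k \<alpha> assume "Q k \<alpha> \<noteq> 0"
    then obtain t where t: "t < N" "ps_mult (f t) (P t k) \<alpha> \<noteq> 0"
      unfolding Q by (auto elim: sum.not_neutral_contains_not_neutral)
    then obtain \<beta> where "P t k (mi_diff \<alpha> \<beta>) \<noteq> 0" by (auto elim: ps_mult_nonzeroD)
    moreover have "mi_diff \<alpha> \<beta> \<le> \<alpha>" by (auto simp: le_fun_def)
    ultimately have "deg k \<le> deg \<alpha> + Cf t"
      using Cf[OF t(1)] deg_mono unfolding order_le_def by (meson add_le_mono1 order.trans)
    moreover have "Cf t \<le> (\<Sum>t<N. Cf t)" using t(1) by (intro member_le_sum) auto
    ultimately show "deg k \<le> deg \<alpha> + (\<Sum>t<N. Cf t)" by linarith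
  qed
  moreover have "const_map Q = (\<lambda>_. 0)"
    using fP by (simp add: Q const_map_def mi_zero_def ps_mult_at_zero max_ideal_def)
  ultimately show "Q \<in> {P \<in> S_set. const_map P = (\<lambda>_. 0)}" by (simp add: S_set_if_order_le)
qed

definition unit_mi :: "'n \<Rightarrow> 'n mi" where
  "unit_mi j = (\<lambda>j'. if j' = j then 1 else 0)"

definition ps_var :: "'n \<Rightarrow> 'n ps" where
  "ps_var j = (\<lambda>\<gamma>. if \<gamma> = unit_mi j then 1 else 0)"

text \<open>A monomial \<open>x\<^sup>\<alpha> \<noteq> 1\<close> is assigned to the variable \<open>chosen_var \<alpha>\<close>, which divides it
  (for \<open>\<alpha> = 0\<close> the choice is arbitrary and never used). \<open>var_quotient P j\<close> is \<open>1/x\<^sub>j\<close> times the part of \<open>P\<close> assigned to \<open>x\<^sub>j\<close>.\<close>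
definition chosen_var :: "('n::finite) mi \<Rightarrow> 'n" where
  "chosen_var \<alpha> = (SOME j. 0 < \<alpha> j)"

definition var_quotient :: "('n::finite) dop \<Rightarrow> 'n \<Rightarrow> 'n dop" where
  "var_quotient P j = (\<lambda>k \<gamma>. if chosen_var (mi_add \<gamma> (unit_mi j)) = j
     then P k (mi_add \<gamma> (unit_mi j)) else 0)"

lemma ps_mult_ps_var:
  "ps_mult (ps_var j) c \<alpha> = (if unit_mi j \<le> \<alpha> then c (mi_diff \<alpha> (unit_mi j)) else 0)"
proof -
  have "ps_mult (ps_var j) c \<alpha> = (\<Sum>\<beta>\<in>{\<beta>. \<beta> \<le> \<alpha>}. if \<beta> = unit_mi j then c (mi_diff \<alpha> \<beta>) else 0)"
    unfolding ps_mult_def ps_var_def by (rule sum.cong) auto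
  then show ?thesis by (simp add: finite_mi_le)
qed

lemma order_le_var_quotient:
  assumes "order_le C P"
  shows "order_le (C + 1) (var_quotient P j)"
  unfolding order_le_def
proof (intro allI impI)
  fix k \<gamma> assume "var_quotient P j k \<gamma> \<noteq> 0"
  then have "P k (mi_add \<gamma> (unit_mi j)) \<noteq> 0" by (auto simp: var_quotient_def split: if_splits)
  then have "deg k \<le> deg (mi_add \<gamma> (unit_mi j)) + C" using assms unfolding order_le_def by blast
  moreover have "deg (unit_mi j) = 1" by (simp add: deg_def unit_mi_def)
  ultimately show "deg k \<le> deg \<gamma> + (C + 1)" by (simp add: deg_mi_add)
qed

lemma sum_ps_var_var_quotient:
  assumes "\<And>k. P k (\<lambda>_. 0) = 0"
  shows "P k \<alpha> = (\<Sum>j\<in>UNIV. ps_mult (ps_var j) (var_quotient P j k) \<alpha>)"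
proof -
  have summand: "ps_mult (ps_var j) (var_quotient P j k) \<alpha>
      = (if 0 < \<alpha> j \<and> chosen_var \<alpha> = j then P k \<alpha> else 0)" for j
  proof (cases "unit_mi j \<le> \<alpha>")
    case True
    have "0 < \<alpha> j" using True by (auto simp: le_fun_def unit_mi_def dest: spec[of _ j])
    moreover have "mi_add (mi_diff \<alpha> (unit_mi j)) (unit_mi j) = \<alpha>"
      using True mi_diff_add_cancel_iff by blast
    ultimately show ?thesis
      unfolding ps_mult_ps_var var_quotient_def using True by (simp only: if_True simp_thms)
  next
    case False
    have "\<not> 0 < \<alpha> j"
    proof
      assume "0 < \<alpha> j"
      then have "unit_mi j \<le> \<alpha>" by (auto simp: le_fun_def unit_mi_def)
      with False show False by simp
    qed
    then show ?thesis unfolding ps_mult_ps_var using False by (simp only: if_False simp_thms)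
  qed
  show ?thesis
  proof (cases "\<exists>j. 0 < \<alpha> j")
    case True
    then have "0 < \<alpha> (chosen_var \<alpha>)" unfolding chosen_var_def by (rule someI_ex)
    then have "(\<Sum>j\<in>UNIV. ps_mult (ps_var j) (var_quotient P j k) \<alpha>)
        = (\<Sum>j\<in>UNIV. if j = chosen_var \<alpha> then P k \<alpha> else 0)"
      unfolding summand by (intro sum.cong) auto
    then show ?thesis by simp
  next
    case False
    then have "(\<Sum>j\<in>UNIV. ps_mult (ps_var j) (var_quotient P j k) \<alpha>) = 0"
      unfolding summand by simp
    moreover have "\<alpha> = (\<lambda>_. 0)" using False by auto
    ultimately show ?thesis using assms by simp
  qed
qed

lemma mem_mS_set_if_const_map_zero:
  fixes P :: "('n::finite) dop"
  assumes "P \<in> S_set" "const_map P = (\<lambda>_. 0)"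
  shows "P \<in> mS_set"
proof -
  obtain C where C: "order_le C P" using order_le_if_S_set[OF assms(1)] .
  have P0: "P k (\<lambda>_. 0) = 0" for k using assms(2) by (auto simp: const_map_def mi_zero_def fun_eq_iff)
  obtain h where h: "bij_betw h {0..<card (UNIV :: 'n set)} (UNIV :: 'n set)"
    using ex_bij_betw_nat_finite[of "UNIV :: 'n set"] by auto
  have decomposition: "P = (\<lambda>k \<alpha>. \<Sum>t<card (UNIV :: 'n set). op_mult (coeff_op (ps_var (h t))) (var_quotient P (h t)) k \<alpha>)"
  proof (intro ext)
    fix k \<alpha>
    show "P k \<alpha> = (\<Sum>t<card (UNIV :: 'n set). op_mult (coeff_op (ps_var (h t))) (var_quotient P (h t)) k \<alpha>)"
    proof -
      have "(\<Sum>t<card (UNIV :: 'n set). op_mult (coeff_op (ps_var (h t))) (var_quotient P (h t)) k \<alpha>)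
          = (\<Sum>t\<in>{0..<card (UNIV :: 'n set)}. ps_mult (ps_var (h t)) (var_quotient P (h t) k) \<alpha>)"
        by (simp only: op_mult_coeff_op lessThan_atLeast0)
      also have "\<dots> = (\<Sum>j\<in>UNIV. ps_mult (ps_var j) (var_quotient P j k) \<alpha>)"
        by (rule sum.reindex_bij_betw[OF h])
      finally show ?thesis
        by (simp only: sum_ps_var_var_quotient[of P k \<alpha>, OF P0, symmetric])
    qed
  qed
  have max: "ps_var j \<in> max_ideal" for j
    by (simp add: ps_var_def max_ideal_def unit_mi_def mi_zero_def fun_eq_iff)
  have S: "var_quotient P j \<in> S_set" for j
    using S_set_if_order_le[OF order_le_var_quotient[OF C]] .
  show ?thesis
    unfolding mS_set_def mem_Collect_eq
    by (intro exI[of _ "card (UNIV :: 'n set)"] exI[of _ "\<lambda>t. ps_var (h t)"]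
        exI[of _ "\<lambda>t. var_quotient P (h t)"] conjI allI impI decomposition max S)
qed

lemma mS_set_eq: "{P \<in> (S_set :: ('n::finite) dop set). const_map P = (\<lambda>_. 0)} = mS_set"
  using mS_set_subset mem_mS_set_if_const_map_zero by blast

theorem theorem5p3:
  shows "
   \<comment> \<open>(1) S is a C-algebra under termwise addition and the Leibniz product (well defined),
        containing D as a subalgebra\<close>
   ((\<forall>P\<in>(S_set :: ('n::finite) dop set). \<forall>Q\<in>S_set. \<forall>m \<alpha>.
        finite {t. leib_term P Q m \<alpha> t \<noteq> 0}) \<and>
    ring (S_ring :: (complex, 'n dop) module) \<and>
    module CC (S_ring :: (complex, 'n dop) module) \<and>
    (\<forall>c P Q. P \<in> (S_set :: 'n dop set) \<longrightarrow> Q \<in> S_set \<longrightarrow>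
        op_smult c (op_mult P Q) = op_mult (op_smult c P) Q \<and>
        op_smult c (op_mult P Q) = op_mult P (op_smult c Q)) \<and>
    (D_set :: 'n dop set) \<subseteq> S_set \<and>
    subring (D_set :: 'n dop set) (S_ring :: (complex, 'n dop) module) \<and>
    (\<forall>c P. P \<in> (D_set :: 'n dop set) \<longrightarrow> op_smult c P \<in> D_set)) \<and>
   \<comment> \<open>(2) P |-> sum a_k(0) d^k induces a C-linear isomorphism S / mS -> C[d]\<close>
   ((\<forall>(P :: 'n dop) Q. const_map (op_add P Q) = (\<lambda>k. const_map P k + const_map Q k)) \<and>
    (\<forall>c (P :: 'n dop). const_map (op_smult c P) = (\<lambda>k. c * const_map P k)) \<and>
    const_map ` (S_set :: 'n dop set) = poly_set \<and>
    {P \<in> (S_set :: 'n dop set). const_map P = (\<lambda>_. 0)} = mS_set) \<and>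
   \<comment> \<open>(3) injective algebra homomorphism S -> End^c(C[[x]]) extending the D-action\<close>
   ((\<forall>P\<in>(S_set :: 'n dop set). \<forall>b \<alpha>. finite {k. app_term P b \<alpha> k \<noteq> 0}) \<and>
    (\<forall>P\<in>(S_set :: 'n dop set). linear_endo (op_apply P) \<and> madic_continuous (op_apply P)) \<and>
    inj_on op_apply (S_set :: 'n dop set) \<and>
    (\<forall>P\<in>(S_set :: 'n dop set). \<forall>Q\<in>S_set.
        op_apply (op_mult P Q) = op_apply P \<circ> op_apply Q \<and>
        op_apply (op_add P Q) = (\<lambda>b \<alpha>. op_apply P b \<alpha> + op_apply Q b \<alpha>)) \<and>
    (\<forall>c. \<forall>P\<in>(S_set :: 'n dop set). op_apply (op_smult c P) = (\<lambda>b \<alpha>. c * op_apply P b \<alpha>)) \<and>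
    op_apply (op_one :: 'n dop) = id \<and>
    (\<forall>P\<in>(D_set :: 'n dop set). op_apply P = D_action P))"
proof -
  note algebra = finite_leib_term ring_S_ring module_S_ring op_smult_op_mult[symmetric]
    D_set_subset_S_set subring_D_set op_smult_in_D_set
  note quotient = const_map_op_add const_map_op_smult const_map_image_S_set mS_set_eq
  note representation = finite_app_term linear_endo_op_apply madic_continuous_op_apply
    inj_on_op_apply op_apply_op_mult op_apply_op_add op_apply_op_smult op_apply_op_one
    op_apply_eq_D_action
  show ?thesis
    by (intro conjI ballI allI impI) (simp_all add: algebra quotient representation)
qed

end
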